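(* Let $M$ be a positive real number. There exists a positive real number $\gamma$, depending only on $M$, such that for every non-zero real number $\xi\in[-M,M]$ and every sequence $(\eta_n)_{n\ge1}$ of real numbers, and for every $\delta>0$, there exists a real number $\varepsilon$ with $0<\varepsilon<\delta$ satisfying $$\inf_{n \ge 1} \, \Vert \xi (1 + \varepsilon)^n + \eta_n \Vert > \gamma\, \varepsilon\, |\log \varepsilon|^{-1}.$$
   Context: For a real number $x$, $\Vert x \Vert$ denotes the distance from $x$ to the nearest integer. $\log$ denotes the natural logarithm. The infimum is over all positive integers $n$. *)

theory Defs
  imports "HOL-Analysis.Analysis"
begin

definition dist_int :: "real \<Rightarrow> real" where
  "dist_int x = (INF k\<in>(\<int>::real set). \<bar>x - k\<bar>)"

end

theory Submission
  imports Defs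
begin

text \<open>
  We may take \<open>\<xi> > 0\<close>, absorbing the sign into \<open>\<eta>\<close>. Fix a dyadic scale \<open>A\<close> and sample
  \<open>\<epsilon> \<in> [A, 2A]\<close> at the leaves of a deep dyadic tree; let the bad event for \<open>n\<close> be that
  \<open>\<xi> (1 + \<epsilon>) ^ n + \<eta> n\<close> comes \<open>\<tau>\<close>-close to an integer. For a steep index \<open>n\<close>, conditioned on the
  coarsest dyadic cell on which the \<open>n\<close>-th term still varies by \<open>O(1)\<close>, the bad event has
  probability \<open>O(\<tau>)\<close>; and every bad event with index at most \<open>n - d\<close> is a union of such cells,
  because going back \<open>d\<close> indices divides the derivative by \<open>(1 + A) ^ d \<ge> 8 / \<tau>\<close>. The
  finitely many flat indices are handled by choosing, among \<open>S\<close> dyadic scales, one on which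
  their total bad probability is at most \<open>1/8\<close>: a fixed index is flat and near an integer on
  only boundedly many scales. A counting form of the lopsided Lov\'asz local lemma then gives a
  leaf avoiding all bad events with \<open>n \<le> N\<close>, and compactness lets \<open>N \<rightarrow> \<infinity>\<close>. With
  \<open>A \<approx> exp (- L)\<close>, \<open>\<tau> = A / (1024 L)\<close> and \<open>\<bar>ln \<epsilon>\<bar> \<ge> L / 2\<close> this gives \<open>\<gamma> = 1 / 8192\<close>.
\<close>

section \<open>Distance to the nearest integer and elementary estimates\<close>

lemma dist_int_ge_iff: "t \<le> dist_int x \<longleftrightarrow> (\<forall>k\<in>(\<int>::real set). t \<le> \<bar>x - k\<bar>)"
  unfolding dist_int_def
  by (rule le_cINF_iff) (auto intro: bdd_belowI[where m=0] simp: Ints_def)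

lemma dist_int_minus: "dist_int (- x) = dist_int x"
proof -
  have "(\<lambda>k. \<bar>- x - k\<bar>) ` \<int> = (\<lambda>k. \<bar>x - k\<bar>) ` (\<int>::real set)"
  proof (intro equalityI subsetI)
    fix y assume "y \<in> (\<lambda>k. \<bar>- x - k\<bar>) ` \<int>"
    then obtain k :: real where "k \<in> \<int>" "y = \<bar>- x - k\<bar>" by blast
    then show "y \<in> (\<lambda>k. \<bar>x - k\<bar>) ` \<int>" by (intro image_eqI[of _ _ "- k"]) auto
  next
    fix y assume "y \<in> (\<lambda>k. \<bar>x - k\<bar>) ` \<int>"
    then obtain k :: real where "k \<in> \<int>" "y = \<bar>x - k\<bar>" by blast
    then show "y \<in> (\<lambda>k. \<bar>- x - k\<bar>) ` \<int>" by (intro image_eqI[of _ _ "- k"]) auto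
  qed
  then show ?thesis unfolding dist_int_def by simp
qed

lemma dist_int_sgn_mult: "x \<noteq> 0 \<Longrightarrow> dist_int (sgn x * y) = dist_int y"
  by (cases "x > 0") (auto simp: dist_int_minus)

definition near_int :: "real \<Rightarrow> real \<Rightarrow> bool" where
  "near_int t x \<longleftrightarrow> (\<exists>z::int. \<bar>x - of_int z\<bar> < t)"

lemma dist_int_ge_iff_not_near_int: "t \<le> dist_int x \<longleftrightarrow> \<not> near_int t x"
  unfolding dist_int_ge_iff near_int_def by (auto elim: Ints_cases simp: not_less)

lemma card_int_interval_le:
  fixes u v :: real
  assumes "Z \<subseteq> {\<lfloor>u\<rfloor> - 1 .. \<lceil>v\<rceil> + 1}" "u \<le> v"
  shows "real (card Z) \<le> v - u + 5"
proof -
  have "card Z \<le> card {\<lfloor>u\<rfloor> - 1 .. \<lceil>v\<rceil> + 1}" using assms(1) by (intro card_mono) auto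
  then have "real (card Z) \<le> real (nat (\<lceil>v\<rceil> + 1 + 1 - (\<lfloor>u\<rfloor> - 1)))" by simp
  moreover have "\<lfloor>u\<rfloor> - 1 \<le> \<lceil>v\<rceil> + 1" using assms(2) by linarith
  ultimately show ?thesis by linarith
qed

lemma power_diff_bounds:
  fixes a b :: real
  assumes "0 \<le> a" "a \<le> b"
  shows "real n * (b - a) * a ^ (n - 1) \<le> b ^ n - a ^ n"
    and "b ^ n - a ^ n \<le> real n * (b - a) * b ^ (n - 1)"
proof -
  have eq: "b ^ n - a ^ n = (b - a) * (\<Sum>i<n. a ^ (n - Suc i) * b ^ i)"
    by (rule power_diff_sumr2)
  have "a ^ (n - 1) \<le> a ^ (n - Suc i) * b ^ i" if "i < n" for i
  proof -
    have "a ^ (n - 1) = a ^ (n - Suc i) * a ^ i" using that by (simp add: power_add[symmetric])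
    also have "\<dots> \<le> a ^ (n - Suc i) * b ^ i"
      using assms by (intro mult_left_mono power_mono) auto
    finally show ?thesis .
  qed
  then have lower: "real n * a ^ (n - 1) \<le> (\<Sum>i<n. a ^ (n - Suc i) * b ^ i)"
    using sum_mono[of "{..<n}" "\<lambda>_. a ^ (n - 1)"] by simp
  have "a ^ (n - Suc i) * b ^ i \<le> b ^ (n - 1)" if "i < n" for i
  proof -
    have "a ^ (n - Suc i) * b ^ i \<le> b ^ (n - Suc i) * b ^ i"
      using assms by (intro mult_right_mono power_mono) auto
    also have "\<dots> = b ^ (n - 1)" using that by (simp add: power_add[symmetric])
    finally show ?thesis .
  qed
  then have upper: "(\<Sum>i<n. a ^ (n - Suc i) * b ^ i) \<le> real n * b ^ (n - 1)"
    using sum_mono[of "{..<n}" _ "\<lambda>_. b ^ (n - 1)"] by simp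
  have "0 \<le> b - a" using assms by simp
  from mult_left_mono[OF lower this] mult_left_mono[OF upper this]
  show "real n * (b - a) * a ^ (n - 1) \<le> b ^ n - a ^ n"
    and "b ^ n - a ^ n \<le> real n * (b - a) * b ^ (n - 1)"
    unfolding eq by (simp_all add: algebra_simps)
qed

lemma one_plus_power_le_exp:
  fixes h :: real
  assumes "0 \<le> h"
  shows "(1 + h) ^ n \<le> exp (real n * h)"
proof -
  have "(1 + h) ^ n \<le> exp h ^ n"
    using assms by (intro power_mono) (auto simp: add.commute)
  also have "\<dots> = exp (real n * h)" by (simp add: exp_of_nat_mult)
  finally show ?thesis .
qed

lemma exp_half_le_one_plus_power:
  fixes x :: real
  assumes "0 \<le> x" "x \<le> 1/2"
  shows "exp (real m * x / 2) \<le> (1 + x) ^ m"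
proof -
  have "x / 2 \<le> x - x\<^sup>2"
    using mult_left_mono[of x "1/2" x] assms by (simp add: power2_eq_square)
  also have "\<dots> \<le> ln (1 + x)" using assms by (intro ln_one_plus_pos_lower_bound) auto
  finally have "real m * (x / 2) \<le> real m * ln (1 + x)" by (intro mult_left_mono) auto
  then have "exp (real m * x / 2) \<le> exp (real m * ln (1 + x))" by simp
  also have "\<dots> = (1 + x) ^ m" using assms by (simp add: exp_of_nat_mult)
  finally show ?thesis .
qed

lemma two_power_le_exp: "(2::real) ^ k \<le> exp (real k)"
proof -
  have "(2::real) ^ k \<le> exp 1 ^ k"
    using exp_ge_add_one_self[of 1] by (intro power_mono) auto
  then show ?thesis by (simp add: exp_of_nat_mult[symmetric])
qed

lemma ln_le_half_self:
  fixes x :: real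
  assumes "0 < x"
  shows "ln x \<le> x / 2"
proof -
  have "ln x = 2 * ln (sqrt x)" using assms by (simp add: ln_sqrt)
  also have "\<dots> \<le> 2 * (sqrt x - 1)" using assms ln_le_minus_one[of "sqrt x"] by simp
  also have "\<dots> \<le> x / 2"
    using assms zero_le_power2[of "sqrt x - 2"] by (simp add: power2_diff algebra_simps)
  finally show ?thesis .
qed

lemma sum_inverse_le_one_plus_ln:
  assumes "1 \<le> N"
  shows "(\<Sum>k\<in>{1..N}. 1 / real k) \<le> 1 + ln (real N)"
  using assms
proof (induction N rule: dec_induct)
  case (step m)
  have "ln (real m) - ln (real (Suc m)) = ln (real m / real (Suc m))"
    using step by (simp add: ln_div)
  also have "\<dots> \<le> real m / real (Suc m) - 1" using step by (intro ln_le_minus_one) auto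
  also have "\<dots> = - (1 / real (Suc m))" by (simp add: field_simps)
  finally show ?case using step.IH by simp
qed simp

lemma card_Int_le_of_fibre_density:
  fixes \<Omega> G A :: "'a set" and f :: "'a \<Rightarrow> 'b" and p :: real
  assumes "finite \<Omega>" and "G \<subseteq> \<Omega>"
    and saturated: "\<And>\<omega> \<omega>'. \<omega> \<in> G \<Longrightarrow> \<omega>' \<in> \<Omega> \<Longrightarrow> f \<omega> = f \<omega>' \<Longrightarrow> \<omega>' \<in> G"
    and density: "\<And>b. real (card (A \<inter> {\<omega>\<in>\<Omega>. f \<omega> = b})) \<le> p * real (card {\<omega>\<in>\<Omega>. f \<omega> = b})"
  shows "real (card (A \<inter> G)) \<le> p * real (card G)"
proof -
  let ?F = "\<lambda>b. {\<omega>\<in>\<Omega>. f \<omega> = b}"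
  have G_eq: "G = (\<Union>b\<in>f ` G. ?F b)"
  proof
    show "(\<Union>b\<in>f ` G. ?F b) \<subseteq> G" using saturated by force
  qed (use \<open>G \<subseteq> \<Omega>\<close> in blast)
  have "finite G" using assms finite_subset by blast
  have fibres: "finite (?F b)" "finite (A \<inter> ?F b)" for b using \<open>finite \<Omega>\<close> by auto
  have card_G: "card G = (\<Sum>b\<in>f ` G. card (?F b))"
    by (subst G_eq, rule card_UN_disjoint) (use \<open>finite G\<close> fibres in auto)
  have "card (A \<inter> G) = card (\<Union>b\<in>f ` G. A \<inter> ?F b)" by (subst G_eq) auto
  also have "\<dots> = (\<Sum>b\<in>f ` G. card (A \<inter> ?F b))"
    by (rule card_UN_disjoint) (use \<open>finite G\<close> fibres in auto)
  finally have "real (card (A \<inter> G)) = (\<Sum>b\<in>f ` G. real (card (A \<inter> ?F b)))" by simp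
  also have "\<dots> \<le> (\<Sum>b\<in>f ` G. p * real (card (?F b)))" by (rule sum_mono) (rule density)
  also have "\<dots> = p * real (card G)" using card_G by (simp add: sum_distrib_left)
  finally show ?thesis .
qed

section \<open>A counting local lemma\<close>

text \<open>
  A counting form of the lopsided Lov\'asz local lemma for events ordered in time, where
  \<open>A i\<close> may interact only with the events indexed by \<open>{l i..<i}\<close>.
\<close>

locale counting_local_lemma =
  fixes \<Omega> :: "'a set" and A :: "nat \<Rightarrow> 'a set" and f :: "nat \<Rightarrow> 'a \<Rightarrow> 'b"
    and p x :: "nat \<Rightarrow> real" and l :: "nat \<Rightarrow> nat"
  assumes finite_\<Omega>: "finite \<Omega>"
    and fibre_density:
      "\<And>i b. real (card (A i \<inter> {\<omega>\<in>\<Omega>. f i \<omega> = b})) \<le> p i * real (card {\<omega>\<in>\<Omega>. f i \<omega> = b})"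
    and saturated: "\<And>i j \<omega> \<omega>'. j < l i \<Longrightarrow> \<omega> \<in> \<Omega> \<Longrightarrow> \<omega>' \<in> \<Omega> \<Longrightarrow> f i \<omega> = f i \<omega>'
      \<Longrightarrow> \<omega> \<in> A j \<Longrightarrow> \<omega>' \<in> A j"
    and x_nonneg: "\<And>i. 0 \<le> x i"
    and x_le_1: "\<And>i. x i \<le> 1"
    and p_le: "\<And>i. p i \<le> x i * (1 - (\<Sum>j\<in>{l i..<i}. x j))"
begin

definition survivors :: "nat set \<Rightarrow> 'a set" where
  "survivors S = \<Omega> - (\<Union>j\<in>S. A j)"

lemma finite_survivors: "finite (survivors S)"
  using finite_\<Omega> unfolding survivors_def by simp

lemma survivors_saturated:
  assumes "S \<subseteq> {..<l i}" "\<omega> \<in> survivors S" "\<omega>' \<in> \<Omega>" "f i \<omega> = f i \<omega>'"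
  shows "\<omega>' \<in> survivors S"
proof -
  have "\<omega>' \<notin> A j" if "j \<in> S" for j
    using assms that saturated[of j i \<omega>' \<omega>] unfolding survivors_def by auto
  then show ?thesis using assms(3) unfolding survivors_def by blast
qed

lemma card_survivors_insert_ge:
  assumes "finite T"
  shows "real (card (survivors (T \<union> S)))
    \<ge> real (card (survivors S)) - (\<Sum>j\<in>T. real (card (A j \<inter> survivors S)))"
proof -
  have sub: "(\<Union>j\<in>T. A j \<inter> survivors S) \<subseteq> survivors S" by auto
  have "survivors (T \<union> S) = survivors S - (\<Union>j\<in>T. A j \<inter> survivors S)"
    unfolding survivors_def by auto
  then have "card (survivors (T \<union> S)) = card (survivors S) - card (\<Union>j\<in>T. A j \<inter> survivors S)"
    using card_Diff_subset[OF finite_subset[OF sub finite_survivors] sub] by simp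
  moreover have "card (\<Union>j\<in>T. A j \<inter> survivors S) \<le> card (survivors S)"
    by (rule card_mono[OF finite_survivors sub])
  moreover have "card (\<Union>j\<in>T. A j \<inter> survivors S) \<le> (\<Sum>j\<in>T. card (A j \<inter> survivors S))"
    by (rule card_UN_le[OF assms])
  ultimately show ?thesis by (simp add: of_nat_diff flip: of_nat_sum)
qed

text \<open>
  The induction splits \<open>S\<close> into the neighbours \<open>S \<inter> {l i..<i}\<close> of \<open>i\<close> and the rest \<open>S'\<close>:
  on the survivors of \<open>S'\<close> the event \<open>A i\<close> has density \<open>p i\<close>, and removing the neighbours
  costs at most the fraction \<open>\<Sum>j\<in>{l i..<i}. x j\<close> by induction.
\<close>

lemma card_Int_survivors_le:
  "S \<subseteq> {..<i} \<Longrightarrow> real (card (A i \<inter> survivors S)) \<le> x i * real (card (survivors S))"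
proof (induction "card S" arbitrary: S i rule: less_induct)
  case less
  define S' where "S' = S - {l i..<i}"
  define T where "T = S \<inter> {l i..<i}"
  have "finite S" using less.prems finite_subset by blast
  have S_eq: "S = T \<union> S'" unfolding S'_def T_def by auto
  have "S' \<subseteq> {..<l i}" using less.prems unfolding S'_def by auto
  have density: "real (card (A i \<inter> survivors S')) \<le> p i * real (card (survivors S'))"
    by (rule card_Int_le_of_fibre_density[OF finite_\<Omega> _ _ fibre_density])
      (use survivors_saturated[OF \<open>S' \<subseteq> {..<l i}\<close>] in \<open>auto simp: survivors_def\<close>)
  have "(\<Sum>j\<in>T. real (card (A j \<inter> survivors S'))) \<le> (\<Sum>j\<in>T. x j * real (card (survivors S')))"
  proof (rule sum_mono)
    fix j assume "j \<in> T"
    then have "j \<in> S" "j \<notin> S'" "l i \<le> j" unfolding T_def S'_def by auto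
    moreover have "S' \<subseteq> S" unfolding S'_def by blast
    ultimately have "S' \<subset> S" "S' \<subseteq> {..<j}" using \<open>S' \<subseteq> {..<l i}\<close> by auto
    then show "real (card (A j \<inter> survivors S')) \<le> x j * real (card (survivors S'))"
      using less.hyps[OF psubset_card_mono[OF \<open>finite S\<close>]] by blast
  qed
  also have "\<dots> \<le> (\<Sum>j\<in>{l i..<i}. x j) * real (card (survivors S'))"
    unfolding sum_distrib_right[symmetric] using x_nonneg
    by (intro mult_right_mono sum_mono2) (auto simp: T_def)
  finally have removed: "(1 - (\<Sum>j\<in>{l i..<i}. x j)) * real (card (survivors S')) \<le> real (card (survivors S))"
    using card_survivors_insert_ge[of T S'] \<open>finite S\<close> S_eq unfolding T_def
    by (simp add: algebra_simps)
  have "p i * real (card (survivors S')) \<le> x i * (1 - (\<Sum>j\<in>{l i..<i}. x j)) * real (card (survivors S'))"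
    using p_le[of i] by (intro mult_right_mono) auto
  also have "\<dots> \<le> x i * real (card (survivors S))"
    using mult_left_mono[OF removed x_nonneg[of i]] by (simp add: mult.assoc)
  finally have "p i * real (card (survivors S')) \<le> x i * real (card (survivors S))" .
  moreover have "card (A i \<inter> survivors S) \<le> card (A i \<inter> survivors S')"
    using finite_survivors by (intro card_mono) (auto simp: survivors_def S'_def)
  ultimately show ?case using density by linarith
qed

lemma card_survivors_ge: "(\<Prod>j<N. 1 - x j) * real (card \<Omega>) \<le> real (card (survivors {..<N}))"
proof (induction N)
  case 0
  then show ?case by (simp add: survivors_def)
next
  case (Suc N)
  have "(\<Prod>j<Suc N. 1 - x j) * real (card \<Omega>) = (1 - x N) * ((\<Prod>j<N. 1 - x j) * real (card \<Omega>))"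
    by (simp add: algebra_simps)
  also have "\<dots> \<le> (1 - x N) * real (card (survivors {..<N}))"
    using Suc.IH x_le_1[of N] by (intro mult_left_mono) auto
  also have "\<dots> \<le> real (card (survivors {..<N})) - real (card (A N \<inter> survivors {..<N}))"
    using card_Int_survivors_le[of "{..<N}" N] by (simp add: algebra_simps)
  also have "\<dots> \<le> real (card (survivors {..<Suc N}))"
    using card_survivors_insert_ge[of "{N}" "{..<N}"] by (simp add: lessThan_Suc)
  finally show ?case .
qed

end

section \<open>Sequences with bounded increments near integers\<close>

locale slope_bounded =
  fixes y dl :: "nat \<Rightarrow> real" and R :: nat
  assumes slope_lower: "\<And>i j. i \<le> j \<Longrightarrow> j < R \<Longrightarrow> real (j - i) * dl i \<le> y j - y i"
    and slope_upper: "\<And>i j. i \<le> j \<Longrightarrow> j < R \<Longrightarrow> y j - y i \<le> real (j - i) * dl j"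
    and mono_dl: "mono dl"
    and dl_0_pos: "0 < dl 0"
begin

lemma dl_pos: "0 < dl i"
  using dl_0_pos monoD[OF mono_dl, of 0 i] by simp

lemma y_mono: "i \<le> j \<Longrightarrow> j < R \<Longrightarrow> y i \<le> y j"
  using slope_lower[of i j] mult_nonneg_nonneg[of "real (j - i)" "dl i"] dl_pos[of i] by linarith

definition near :: "real \<Rightarrow> int \<Rightarrow> nat set" where
  "near t z = {i. i < R \<and> \<bar>y i - of_int z\<bar> < t}"

definition below :: "real \<Rightarrow> int \<Rightarrow> nat set" where
  "below t z = {i. i < R \<and> of_int z - 1 + t \<le> y i \<and> y i \<le> of_int z - t}"

lemma finite_near: "finite (near t z)" and finite_below: "finite (below t z)"
  unfolding near_def below_def by simp_all

lemma disjoint_below: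
  assumes "0 < t" "z \<noteq> z'"
  shows "below t z \<inter> below t z' = {}"
proof -
  have "of_int z + 1 \<le> (of_int z' :: real) \<or> of_int z' + 1 \<le> (of_int z :: real)"
    using assms(2) by linarith
  then show ?thesis unfolding below_def using assms(1) by auto
qed

lemma card_near_le_inverse_slope:
  assumes "i \<in> near t z" "\<And>j. j \<in> near t z \<Longrightarrow> i \<le> j"
  shows "real (card (near t z)) \<le> 2 * t / dl i + 1"
proof -
  define m where "m = nat \<lfloor>2 * t / dl i\<rfloor>"
  have "near t z \<subseteq> {i..i + m}"
  proof
    fix j assume j: "j \<in> near t z"
    then have "real (j - i) * dl i \<le> y j - y i" using assms slope_lower unfolding near_def by auto
    also have "\<dots> < 2 * t" using j assms(1) unfolding near_def by (auto simp: abs_less_iff)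
    finally have "real (j - i) < 2 * t / dl i" using dl_pos[of i] by (simp add: field_simps)
    then have "j - i \<le> m" unfolding m_def by linarith
    then show "j \<in> {i..i + m}" using assms(2)[OF j] by simp
  qed
  then have "card (near t z) \<le> m + 1" using card_mono[of "{i..i + m}"] by fastforce
  moreover have "0 \<le> t" using assms(1) unfolding near_def by auto
  then have "real m \<le> 2 * t / dl i" unfolding m_def using dl_pos[of i] by simp
  ultimately show ?thesis by linarith
qed

text \<open>
  Before a sequence with increments at most \<open>dl i\<close> first comes near an integer \<open>z\<close> at time
  \<open>i\<close>, it must have crossed the interval between \<open>z - 1\<close> and \<open>z\<close> unless it started close to
  \<open>z\<close>; this costs about \<open>1 / dl i\<close> steps, all of them in \<open>below t z\<close>.
\<close>

lemma inverse_slope_le_card_below: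
  assumes t: "0 < t" "t \<le> 1/4" and z: "\<lfloor>y 0\<rfloor> + 2 \<le> z"
    and i: "i \<in> near t z" "\<And>j. j \<in> near t z \<Longrightarrow> i \<le> j"
  shows "1 / dl i < 2 * (real (card (below t z)) + 1)"
proof -
  have iR: "i < R" and iz: "\<bar>y i - of_int z\<bar> < t" using i(1) unfolding near_def by auto
  define P where "P k \<longleftrightarrow> of_int z - 1 + t \<le> y k" for k
  define j where "j = (LEAST k. P k)"
  have "P i" using iz t unfolding P_def by (auto simp: abs_less_iff)
  then have "j \<le> i" "P j" unfolding j_def by (rule Least_le, rule LeastI)
  have "\<not> P 0" using z t unfolding P_def by linarith
  with \<open>P j\<close> have "j \<noteq> 0" by (cases j) auto
  then have "\<not> P (j - 1)" unfolding j_def by (intro not_less_Least) simp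
  have "{j..<i} \<subseteq> below t z"
  proof
    fix k assume k: "k \<in> {j..<i}"
    then have "k \<notin> near t z" using i(2)[of k] by auto
    moreover have "y j \<le> y k" "y k \<le> y i" using k iR y_mono by auto
    ultimately show "k \<in> below t z"
      using \<open>P j\<close> iR k iz unfolding near_def below_def P_def by (auto simp: abs_less_iff)
  qed
  then have "card {j..<i} \<le> card (below t z)" by (rule card_mono[OF finite_below])
  then have card: "real (i - j) \<le> real (card (below t z))" by simp
  have "1 / 2 < y i - y (j - 1)" using \<open>\<not> P (j - 1)\<close> iz t unfolding P_def by (auto simp: abs_less_iff)
  also have "\<dots> \<le> real (i - (j - 1)) * dl i" using slope_upper[of "j - 1" i] \<open>j \<le> i\<close> iR by auto
  also have "real (i - (j - 1)) = real (i - j) + 1" using \<open>j \<le> i\<close> \<open>j \<noteq> 0\<close> by auto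
  finally have "1 / 2 < (real (i - j) + 1) * dl i" .
  then have "1 / dl i < 2 * (real (i - j) + 1)" using dl_pos[of i] by (simp add: field_simps)
  also have "\<dots> \<le> 2 * (real (card (below t z)) + 1)" using card by simp
  finally show ?thesis .
qed

lemma card_near_le:
  assumes t: "0 < t" "t \<le> 1/4"
  shows "real (card (near t z))
    \<le> 4 * t * (real (card (below t z)) + 1) + 1
      + (if z = \<lfloor>y 0\<rfloor> \<or> z = \<lfloor>y 0\<rfloor> + 1 then 2 * t / dl 0 else 0)"
proof (cases "near t z = {}")
  case False
  define i where "i = Min (near t z)"
  have i: "i \<in> near t z" "\<And>j. j \<in> near t z \<Longrightarrow> i \<le> j"
    using False finite_near unfolding i_def by auto
  have "y 0 \<le> y i" "\<bar>y i - of_int z\<bar> < t" using i(1) y_mono unfolding near_def by auto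
  then have "\<lfloor>y 0\<rfloor> \<le> z" using t by (auto simp: abs_less_iff) linarith
  then consider "z = \<lfloor>y 0\<rfloor> \<or> z = \<lfloor>y 0\<rfloor> + 1" | "\<lfloor>y 0\<rfloor> + 2 \<le> z" by linarith
  then show ?thesis
  proof cases
    case 1
    have "2 * t / dl i \<le> 2 * t / dl 0"
      using monoD[OF mono_dl, of 0 i] dl_0_pos t by (intro divide_left_mono) auto
    moreover have "0 \<le> 4 * t * (real (card (below t z)) + 1)" using t by simp
    ultimately show ?thesis using card_near_le_inverse_slope[OF i] 1 by simp
  next
    case 2
    have "2 * t / dl i = 2 * t * (1 / dl i)" by simp
    also have "\<dots> \<le> 2 * t * (2 * (real (card (below t z)) + 1))"
      using inverse_slope_le_card_below[OF t 2 i] t by (intro mult_left_mono) auto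
    also have "\<dots> = 4 * t * (real (card (below t z)) + 1)" by (simp add: algebra_simps)
    finally show ?thesis using card_near_le_inverse_slope[OF i] 2 by simp
  qed
qed (use t dl_0_pos in simp)

lemma sum_card_below_le:
  assumes "0 < t" "finite Z"
  shows "(\<Sum>z\<in>Z. real (card (below t z))) \<le> real R"
proof -
  have "(\<Sum>z\<in>Z. card (below t z)) = card (\<Union>z\<in>Z. below t z)"
    by (rule card_UN_disjoint[symmetric]) (use assms finite_below disjoint_below in auto)
  also have "\<dots> \<le> card {..<R}" by (rule card_mono) (auto simp: below_def)
  finally show ?thesis by (simp flip: of_nat_sum)
qed

lemma card_near_integers_le_sum:
  assumes R: "0 < R" and t: "t \<le> 1/4"
  shows "real (card {i. i < R \<and> near_int t (y i)})
    \<le> (\<Sum>z\<in>{\<lfloor>y 0\<rfloor> - 1 .. \<lceil>y (R - 1)\<rceil> + 1}. real (card (near t z)))"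
proof -
  let ?Z = "{\<lfloor>y 0\<rfloor> - 1 .. \<lceil>y (R - 1)\<rceil> + 1}"
  have "{i. i < R \<and> near_int t (y i)} \<subseteq> (\<Union>z\<in>?Z. near t z)"
  proof
    fix i assume "i \<in> {i. i < R \<and> near_int t (y i)}"
    then obtain z :: int where i: "i < R" "\<bar>y i - z\<bar> < t" by (auto simp: near_int_def)
    moreover have "y 0 \<le> y i" "y i \<le> y (R - 1)" using y_mono i(1) by auto
    ultimately have "z \<in> ?Z" using t by (auto simp: abs_less_iff) linarith+
    then show "i \<in> (\<Union>z\<in>?Z. near t z)" unfolding near_def using i by auto
  qed
  then have "card {i. i < R \<and> near_int t (y i)} \<le> card (\<Union>z\<in>?Z. near t z)"
    by (intro card_mono) (auto simp: finite_near)
  also have "\<dots> \<le> (\<Sum>z\<in>?Z. card (near t z))" by (rule card_UN_le) simp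
  finally show ?thesis by (simp flip: of_nat_sum)
qed

text \<open>
  Besides the trivial proportion \<open>4 t\<close>, each integer crossed costs a bounded amount, and only
  the integers near the start may cost \<open>t / dl 0\<close> for a flat start.
\<close>

lemma card_near_integers_le:
  assumes R: "0 < R" and t: "0 < t" "t \<le> 1/4"
  shows "real (card {i. i < R \<and> near_int t (y i)})
           \<le> 4 * t * R + 2 * (y (R - 1) - y 0 + 5) + 4 * t / dl 0"
proof -
  define Zs where "Zs = {\<lfloor>y 0\<rfloor> - 1 .. \<lceil>y (R - 1)\<rceil> + 1}"
  define E where "E z = (if z = \<lfloor>y 0\<rfloor> \<or> z = \<lfloor>y 0\<rfloor> + 1 then 2 * t / dl 0 else 0)" for z
  have "real (card {i. i < R \<and> near_int t (y i)}) \<le> (\<Sum>z\<in>Zs. real (card (near t z)))"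
    unfolding Zs_def by (rule card_near_integers_le_sum[OF R t(2)])
  also have "\<dots> \<le> (\<Sum>z\<in>Zs. 4 * t * (real (card (below t z)) + 1) + 1 + E z)"
    by (rule sum_mono) (use card_near_le[OF t] in \<open>simp add: E_def\<close>)
  also have "\<dots> = 4 * t * (\<Sum>z\<in>Zs. real (card (below t z))) + (4 * t + 1) * real (card Zs) + (\<Sum>z\<in>Zs. E z)"
    by (simp add: sum.distrib sum_distrib_left algebra_simps)
  also have "\<dots> \<le> 4 * t * real R + 2 * (y (R - 1) - y 0 + 5) + 4 * t / dl 0"
  proof -
    have "4 * t * (\<Sum>z\<in>Zs. real (card (below t z))) \<le> 4 * t * real R"
      using sum_card_below_le[of t Zs] t unfolding Zs_def by (intro mult_left_mono) auto
    moreover have "(4 * t + 1) * real (card Zs) \<le> 2 * (y (R - 1) - y 0 + 5)"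
    proof -
      have "real (card Zs) \<le> y (R - 1) - y 0 + 5"
        unfolding Zs_def using y_mono R by (intro card_int_interval_le) auto
      have "(4 * t + 1) * real (card Zs) \<le> 2 * real (card Zs)"
        using t by (intro mult_right_mono) auto
      also have "\<dots> \<le> 2 * (y (R - 1) - y 0 + 5)" using \<open>real (card Zs) \<le> _\<close> by simp
      finally show ?thesis .
    qed
    moreover have "(\<Sum>z\<in>Zs. E z) = (\<Sum>z\<in>Zs \<inter> {\<lfloor>y 0\<rfloor>, \<lfloor>y 0\<rfloor> + 1}. E z)"
      by (rule sum.mono_neutral_right) (auto simp: Zs_def E_def)
    moreover have "\<dots> \<le> (\<Sum>z\<in>{\<lfloor>y 0\<rfloor>, \<lfloor>y 0\<rfloor> + 1}. E z)"
      by (rule sum_mono2) (use t dl_0_pos in \<open>auto simp: E_def\<close>)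
    ultimately show ?thesis by (simp add: E_def)
  qed
  finally show ?thesis .
qed

end

section \<open>Perturbed geometric sequences\<close>

definition geom :: "real \<Rightarrow> (nat \<Rightarrow> real) \<Rightarrow> nat \<Rightarrow> real \<Rightarrow> real" where
  "geom \<xi> \<eta> n e = \<xi> * (1 + e) ^ n + \<eta> n"

definition geom_deriv :: "real \<Rightarrow> nat \<Rightarrow> real \<Rightarrow> real" where
  "geom_deriv \<xi> n e = \<xi> * real n * (1 + e) ^ (n - 1)"

lemma geom_deriv_nonneg: "0 \<le> \<xi> \<Longrightarrow> 0 \<le> e \<Longrightarrow> 0 \<le> geom_deriv \<xi> n e"
  unfolding geom_deriv_def by simp

lemma geom_deriv_pos: "0 < \<xi> \<Longrightarrow> 0 \<le> e \<Longrightarrow> 1 \<le> n \<Longrightarrow> 0 < geom_deriv \<xi> n e"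
  unfolding geom_deriv_def by simp

lemma geom_deriv_mono:
  "0 \<le> \<xi> \<Longrightarrow> 0 \<le> x \<Longrightarrow> x \<le> y \<Longrightarrow> geom_deriv \<xi> n x \<le> geom_deriv \<xi> n y"
  unfolding geom_deriv_def by (intro mult_left_mono power_mono) auto

lemma geom_deriv_mono_index:
  assumes "0 \<le> \<xi>" "0 \<le> x" "n \<le> n'"
  shows "geom_deriv \<xi> n x \<le> geom_deriv \<xi> n' x"
proof -
  have "(1 + x) ^ (n - 1) \<le> (1 + x) ^ (n' - 1)" using assms by (intro power_increasing) auto
  then have "real n * (1 + x) ^ (n - 1) \<le> real n' * (1 + x) ^ (n' - 1)"
    using assms by (intro mult_mono) auto
  then show ?thesis unfolding geom_deriv_def using assms by (simp add: mult.assoc mult_left_mono)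
qed

lemma geom_deriv_ge_linear: "0 \<le> \<xi> \<Longrightarrow> 0 \<le> x \<Longrightarrow> \<xi> * real n \<le> geom_deriv \<xi> n x"
  unfolding geom_deriv_def
  using mult_left_mono[of 1 "(1 + x) ^ (n - 1)" "\<xi> * real n"] by simp

lemma geom_deriv_ratio:
  assumes "0 \<le> \<xi>" "1 \<le> j" "j \<le> i" "0 \<le> a" "a \<le> x"
  shows "geom_deriv \<xi> j x * (1 + a) ^ (i - j) \<le> geom_deriv \<xi> i x"
proof -
  have "(1 + x) ^ (j - 1) * (1 + a) ^ (i - j) \<le> (1 + x) ^ (j - 1) * (1 + x) ^ (i - j)"
    using assms by (intro mult_left_mono power_mono) auto
  also have "\<dots> = (1 + x) ^ (i - 1)" using assms by (simp add: power_add[symmetric])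
  finally have "\<xi> * real j * ((1 + x) ^ (j - 1) * (1 + a) ^ (i - j)) \<le> \<xi> * real i * (1 + x) ^ (i - 1)"
    using assms by (intro mult_mono) auto
  then show ?thesis unfolding geom_deriv_def by (simp add: mult.assoc)
qed

lemma geom_diff_bounds:
  assumes "0 \<le> \<xi>" "0 \<le> x" "x \<le> y"
  shows "(y - x) * geom_deriv \<xi> n x \<le> geom \<xi> \<eta> n y - geom \<xi> \<eta> n x"
    and "geom \<xi> \<eta> n y - geom \<xi> \<eta> n x \<le> (y - x) * geom_deriv \<xi> n y"
proof -
  have diff: "geom \<xi> \<eta> n y - geom \<xi> \<eta> n x = \<xi> * ((1 + y) ^ n - (1 + x) ^ n)"
    unfolding geom_def by (simp add: algebra_simps)
  note bounds = power_diff_bounds[of "1 + x" "1 + y" n]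
  show "(y - x) * geom_deriv \<xi> n x \<le> geom \<xi> \<eta> n y - geom \<xi> \<eta> n x"
    unfolding diff geom_deriv_def using mult_left_mono[OF bounds(1) assms(1)] assms
    by (simp add: algebra_simps)
  show "geom \<xi> \<eta> n y - geom \<xi> \<eta> n x \<le> (y - x) * geom_deriv \<xi> n y"
    unfolding diff geom_deriv_def using mult_left_mono[OF bounds(2) assms(1)] assms
    by (simp add: algebra_simps)
qed

lemma geom_mono: "0 \<le> \<xi> \<Longrightarrow> 0 \<le> x \<Longrightarrow> x \<le> y \<Longrightarrow> geom \<xi> \<eta> n x \<le> geom \<xi> \<eta> n y"
  using geom_diff_bounds(1)[where \<xi>=\<xi> and x=x and y=y and n=n and \<eta>=\<eta>] geom_deriv_nonneg[of \<xi> x n]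
    mult_nonneg_nonneg[of "y - x" "geom_deriv \<xi> n x"]
  by linarith

lemma abs_geom_diff_le:
  assumes "0 \<le> \<xi>" "0 \<le> lo" "lo \<le> x" "x \<le> hi" "lo \<le> y" "y \<le> hi"
  shows "\<bar>geom \<xi> \<eta> n x - geom \<xi> \<eta> n y\<bar> \<le> (hi - lo) * geom_deriv \<xi> n hi"
proof -
  have bound: "\<bar>geom \<xi> \<eta> n v - geom \<xi> \<eta> n u\<bar> \<le> (hi - lo) * geom_deriv \<xi> n hi"
    if "lo \<le> u" "u \<le> v" "v \<le> hi" for u v
  proof -
    have "geom \<xi> \<eta> n u \<le> geom \<xi> \<eta> n v" using geom_mono assms that by auto
    have "geom \<xi> \<eta> n v - geom \<xi> \<eta> n u \<le> (v - u) * geom_deriv \<xi> n v"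
      using geom_diff_bounds(2) assms that by auto
    also have "\<dots> \<le> (hi - lo) * geom_deriv \<xi> n hi"
      using assms that by (intro mult_mono geom_deriv_mono geom_deriv_nonneg) auto
    finally show ?thesis using \<open>geom \<xi> \<eta> n u \<le> geom \<xi> \<eta> n v\<close> by simp
  qed
  show ?thesis
    using bound[of x y] bound[of y x] assms by (cases "x \<le> y") (auto simp: abs_minus_commute)
qed

lemma slope_bounded_geom:
  assumes "0 < \<xi>" "1 \<le> n" "0 \<le> b" "0 < w"
  shows "slope_bounded (\<lambda>t. geom \<xi> \<eta> n (b + real t * w)) (\<lambda>t. w * geom_deriv \<xi> n (b + real t * w)) R"
proof
  fix i j :: nat assume "i \<le> j"
  then have step: "b + real j * w - (b + real i * w) = real (j - i) * w"
    and le: "b + real i * w \<le> b + real j * w"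
    using assms by (simp_all add: of_nat_diff algebra_simps mult_right_mono)
  have nonneg: "0 \<le> b + real i * w" using assms by simp
  show "real (j - i) * (w * geom_deriv \<xi> n (b + real i * w))
      \<le> geom \<xi> \<eta> n (b + real j * w) - geom \<xi> \<eta> n (b + real i * w)"
    using geom_diff_bounds(1)[OF _ nonneg le, where n=n and \<eta>=\<eta>] assms step by (simp add: mult.assoc)
  show "geom \<xi> \<eta> n (b + real j * w) - geom \<xi> \<eta> n (b + real i * w)
      \<le> real (j - i) * (w * geom_deriv \<xi> n (b + real j * w))"
    using geom_diff_bounds(2)[OF _ nonneg le, where n=n and \<eta>=\<eta>] assms step by (simp add: mult.assoc)
next
  show "mono (\<lambda>t. w * geom_deriv \<xi> n (b + real t * w))"
    using assms by (intro monoI mult_left_mono geom_deriv_mono) (auto intro: mult_right_mono)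
  show "0 < w * geom_deriv \<xi> n (b + real 0 * w)"
    using assms geom_deriv_pos[of \<xi> b n] by simp
qed

lemma geom_deriv_shift_le:
  assumes "0 \<le> \<xi>" "0 \<le> x" "0 \<le> h" "real (n - 1) * h \<le> 1"
  shows "geom_deriv \<xi> n (x + h) \<le> 3 * geom_deriv \<xi> n x"
proof -
  have "(1 + (x + h)) ^ (n - 1) \<le> ((1 + x) * (1 + h)) ^ (n - 1)"
    using assms by (intro power_mono) (auto simp: algebra_simps)
  also have "\<dots> = (1 + x) ^ (n - 1) * (1 + h) ^ (n - 1)" by (simp add: power_mult_distrib)
  also have "\<dots> \<le> (1 + x) ^ (n - 1) * 3"
  proof -
    have "(1 + h) ^ (n - 1) \<le> exp (real (n - 1) * h)" using assms by (intro one_plus_power_le_exp)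
    also have "\<dots> \<le> exp 1" using assms by simp
    also have "\<dots> \<le> 3" by (rule exp_le)
    finally show ?thesis using assms by (intro mult_left_mono) auto
  qed
  finally show ?thesis unfolding geom_deriv_def using assms
    by (simp add: algebra_simps mult_left_mono)
qed

definition root_bound :: "real \<Rightarrow> (nat \<Rightarrow> real) \<Rightarrow> real \<Rightarrow> real \<Rightarrow> nat \<Rightarrow> real" where
  "root_bound \<xi> \<eta> A \<tau> n =
    (if \<exists>e\<in>{A..2 * A}. near_int (2 * \<tau>) (geom \<xi> \<eta> n e)
     then 9 * \<tau> + 8 * \<tau> / (A * geom_deriv \<xi> n A) else 0)"

lemma root_bound_nonneg: "0 \<le> \<xi> \<Longrightarrow> 0 \<le> A \<Longrightarrow> 0 \<le> \<tau> \<Longrightarrow> 0 \<le> root_bound \<xi> \<eta> A \<tau> n"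
  unfolding root_bound_def using geom_deriv_nonneg[of \<xi> A n] by simp

lemma Least_eq_Least_if_agree:
  fixes P Q :: "nat \<Rightarrow> bool"
  assumes agree: "\<And>k. k \<le> m \<Longrightarrow> P k \<longleftrightarrow> Q k" and "P m"
  shows "(LEAST k. P k) = (LEAST k. Q k)"
proof -
  have le: "(LEAST k. P k) \<le> m" using \<open>P m\<close> by (rule Least_le)
  show ?thesis
  proof (rule Least_equality[symmetric])
    show "Q (LEAST k. P k)" using agree[OF le] LeastI[of P, OF \<open>P m\<close>] by simp
    show "(LEAST k. P k) \<le> k" if "Q k" for k
    proof (rule ccontr)
      assume "\<not> (LEAST k. P k) \<le> k"
      then have "k \<le> m" "\<not> P k" using le not_less_Least[of k P] by auto
      then show False using agree \<open>Q k\<close> by blast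
    qed
  qed
qed

section \<open>Good points at one dyadic scale\<close>

text \<open>
  Points of \<open>[A, 2A]\<close> are sampled as the left endpoints \<open>cell_left depth \<omega>\<close> of the
  \<open>2 ^ depth\<close> dyadic subintervals, the leaves \<open>\<omega> < 2 ^ depth\<close>; \<open>ancestor k \<omega>\<close> indexes the
  level-\<open>k\<close> interval containing leaf \<open>\<omega>\<close>. The event \<open>bad n\<close> asks \<open>geom \<xi> \<eta> n\<close> to come
  \<open>\<tau>\<close>-close to an integer on the coarsest interval around \<open>\<omega>\<close> on which its variation bound
  is at most \<open>\<tau>\<close>, so that it depends only on that interval. The colour of \<open>\<omega>\<close> for a steep
  index \<open>n > Nst\<close> is its interval at the coarsest level with variation bound at most 8; for the
  flat indices \<open>n \<le> Nst\<close> it is the whole interval.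
\<close>

locale dyadic_scale =
  fixes \<xi> A \<tau> :: real and \<eta> :: "nat \<Rightarrow> real" and N Nst d F0 E :: nat
  assumes xi_pos: "0 < \<xi>" and A_pos: "0 < A"
    and tau_pos: "0 < \<tau>" and tau_le: "\<tau> \<le> 1/64"
    and steep: "\<And>n. Nst < n \<Longrightarrow> 16 \<le> \<xi> * (1 + A) ^ (n - 1)"
    and steep_linear: "\<And>n. Nst < n \<Longrightarrow> 1 \<le> A * \<xi> * real n"
    and lag_growth: "8 \<le> \<tau> * (1 + A) ^ d"
    and lag_small: "34 * \<tau> * real d \<le> 1/4"
    and fine_depth: "\<And>n. n \<le> N \<Longrightarrow> A / 2 ^ F0 * geom_deriv \<xi> n (2 * A) \<le> \<tau>"
    and extra_depth: "26 \<le> \<tau> * 2 ^ E"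
    and total_depth: "2 * (A * geom_deriv \<xi> N (2 * A) + 5) \<le> \<tau> * 2 ^ (F0 + E)"
    and roots_small: "(\<Sum>n\<in>{1..Nst}. root_bound \<xi> \<eta> A \<tau> n) \<le> 1/8"
begin

abbreviation "g \<equiv> geom \<xi> \<eta>"
abbreviation "D \<equiv> geom_deriv \<xi>"

definition depth :: nat where "depth = F0 + E"
definition width :: "nat \<Rightarrow> real" where "width k = A / 2 ^ k"
definition cell_left :: "nat \<Rightarrow> nat \<Rightarrow> real" where "cell_left k c = A + real c * width k"
definition cell_right :: "nat \<Rightarrow> nat \<Rightarrow> real" where "cell_right k c = cell_left k c + width k"
definition ancestor :: "nat \<Rightarrow> nat \<Rightarrow> nat" where "ancestor k \<omega> = \<omega> div 2 ^ (depth - k)"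
definition level_interval :: "nat \<Rightarrow> nat \<Rightarrow> real set" where
  "level_interval k \<omega> = {cell_left k (ancestor k \<omega>)..cell_right k (ancestor k \<omega>)}"
definition cell :: "nat \<Rightarrow> nat \<Rightarrow> nat set" where
  "cell k c = {\<omega>. \<omega> < 2 ^ depth \<and> ancestor k \<omega> = c}"

definition fine_at :: "nat \<Rightarrow> nat \<Rightarrow> nat \<Rightarrow> bool" where
  "fine_at n \<omega> k \<longleftrightarrow> width k * D n (cell_right k (ancestor k \<omega>)) \<le> \<tau>"
definition coarse_at :: "nat \<Rightarrow> nat \<Rightarrow> nat \<Rightarrow> bool" where
  "coarse_at n \<omega> k \<longleftrightarrow> width k * D n (cell_right k (ancestor k \<omega>)) \<le> 8"
definition fine_level :: "nat \<Rightarrow> nat \<Rightarrow> nat" where "fine_level n \<omega> = (LEAST k. fine_at n \<omega> k)"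
definition coarse_level :: "nat \<Rightarrow> nat \<Rightarrow> nat" where "coarse_level n \<omega> = (LEAST k. coarse_at n \<omega> k)"

definition bad :: "nat \<Rightarrow> nat set" where
  "bad n = (if n = 0 \<or> N < n then {} else
     {\<omega>. \<omega> < 2 ^ depth \<and> (\<exists>e\<in>level_interval (fine_level n \<omega>) \<omega>. near_int \<tau> (g n e))})"

definition colour_level :: "nat \<Rightarrow> nat \<Rightarrow> nat" where
  "colour_level n \<omega> = (if n \<le> Nst then 0 else coarse_level n \<omega>)"
definition colour :: "nat \<Rightarrow> nat \<Rightarrow> nat \<times> nat" where
  "colour n \<omega> = (if n = 0 \<or> N < n then (\<omega>, 0) else (colour_level n \<omega>, ancestor (colour_level n \<omega>) \<omega>))"

definition prob :: "nat \<Rightarrow> real" where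
  "prob n = (if n = 0 \<or> N < n then 0 else if n \<le> Nst then root_bound \<xi> \<eta> A \<tau> n else 17 * \<tau>)"
definition weight :: "nat \<Rightarrow> real" where "weight n = 2 * prob n"
definition nbhd_start :: "nat \<Rightarrow> nat" where
  "nbhd_start n = (if n \<le> Nst + d then 0 else n - d)"

lemma width_pos: "0 < width k"
  unfolding width_def using A_pos by simp

lemma width_eq: "k \<le> depth \<Longrightarrow> width k = real (2 ^ (depth - k)) * width depth"
proof -
  assume "k \<le> depth"
  then have "(2::real) ^ depth = 2 ^ k * 2 ^ (depth - k)" by (simp add: power_add[symmetric])
  then show ?thesis unfolding width_def by (simp add: field_simps)
qed

lemma width_Suc: "width k = 2 * width (Suc k)"
  unfolding width_def by simp

lemma ancestor_ancestor: "k \<le> m \<Longrightarrow> m \<le> depth \<Longrightarrow> ancestor k \<omega> = ancestor m \<omega> div 2 ^ (m - k)"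
proof -
  assume "k \<le> m" "m \<le> depth"
  then have "(2::nat) ^ (depth - k) = 2 ^ (depth - m) * 2 ^ (m - k)" by (simp add: power_add[symmetric])
  then show ?thesis unfolding ancestor_def by (simp add: div_mult2_eq)
qed

lemma ancestor_less: "\<omega> < 2 ^ depth \<Longrightarrow> k \<le> depth \<Longrightarrow> ancestor k \<omega> < 2 ^ k"
proof -
  assume "\<omega> < 2 ^ depth" "k \<le> depth"
  then have "\<omega> < 2 ^ k * 2 ^ (depth - k)" by (simp add: power_add[symmetric])
  then show ?thesis unfolding ancestor_def by (simp add: less_mult_imp_div_less)
qed

lemma ancestor_0: "\<omega> < 2 ^ depth \<Longrightarrow> ancestor 0 \<omega> = 0"
  unfolding ancestor_def by simp

lemma cell_left_ge: "A \<le> cell_left k c"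
  unfolding cell_left_def using width_pos[of k] by simp

lemma cell_left_nonneg: "0 \<le> cell_left k c"
  using cell_left_ge A_pos by (meson less_le_trans less_imp_le)

lemma cell_left_le_right: "cell_left k c \<le> cell_right k c"
  unfolding cell_right_def using width_pos[of k] by simp

lemma cell_right_le: "c < 2 ^ k \<Longrightarrow> cell_right k c \<le> 2 * A"
proof -
  assume "c < 2 ^ k"
  then have "real (c + 1) \<le> 2 ^ k" by (metis Suc_eq_plus1 Suc_leI of_nat_le_iff of_nat_numeral of_nat_power)
  then have "real (c + 1) * width k \<le> 2 ^ k * width k" using width_pos[of k] by (intro mult_right_mono) auto
  moreover have "cell_right k c = A + real (c + 1) * width k"
    unfolding cell_right_def cell_left_def by (simp add: algebra_simps)
  moreover have "2 ^ k * width k = A" unfolding width_def by simp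
  ultimately show ?thesis by simp
qed

lemma cell_left_depth_eq:
  assumes "k \<le> depth"
  shows "cell_left depth \<omega> = cell_left k (ancestor k \<omega>) + real (\<omega> mod 2 ^ (depth - k)) * width depth"
proof -
  let ?q = "(2::nat) ^ (depth - k)"
  have "\<omega> = ancestor k \<omega> * ?q + \<omega> mod ?q" unfolding ancestor_def by (rule div_mult_mod_eq[symmetric])
  then have "real \<omega> = real (ancestor k \<omega>) * real ?q + real (\<omega> mod ?q)"
    by (metis of_nat_add of_nat_mult)
  then have "real \<omega> * width depth = real (ancestor k \<omega>) * (real ?q * width depth) + real (\<omega> mod ?q) * width depth"
    by (simp add: algebra_simps)
  then show ?thesis unfolding cell_left_def width_eq[OF assms] by simp
qed

lemma cell_left_depth_in_level_interval: "k \<le> depth \<Longrightarrow> cell_left depth \<omega> \<in> level_interval k \<omega>"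
proof -
  assume k: "k \<le> depth"
  have "real (\<omega> mod 2 ^ (depth - k)) \<le> real (2 ^ (depth - k))" by simp
  then have "real (\<omega> mod 2 ^ (depth - k)) * width depth \<le> width k"
    unfolding width_eq[OF k] using width_pos[of depth] by (intro mult_right_mono) auto
  then show ?thesis
    unfolding level_interval_def cell_right_def cell_left_depth_eq[OF k] using width_pos[of depth] by simp
qed

lemma cell_left_parent_le: "cell_left k (c div 2) \<le> cell_left (Suc k) c"
proof -
  have "real (c div 2) * 2 \<le> real c" by linarith
  then have "(real (c div 2) * 2) * width (Suc k) \<le> real c * width (Suc k)"
    using width_pos[of "Suc k"] by (intro mult_right_mono) auto
  then show ?thesis unfolding cell_left_def using width_Suc[of k] by (simp add: algebra_simps)
qed

lemma fine_F0: "n \<le> N \<Longrightarrow> \<omega> < 2 ^ depth \<Longrightarrow> fine_at n \<omega> F0"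
proof -
  assume n: "n \<le> N" and \<omega>: "\<omega> < 2 ^ depth"
  have "ancestor F0 \<omega> < 2 ^ F0" using ancestor_less[OF \<omega>] by (simp add: depth_def)
  then have "cell_right F0 (ancestor F0 \<omega>) \<le> 2 * A" by (rule cell_right_le)
  moreover have "0 \<le> cell_right F0 (ancestor F0 \<omega>)"
    using cell_left_nonneg cell_left_le_right order_trans by blast
  ultimately have "D n (cell_right F0 (ancestor F0 \<omega>)) \<le> D n (2 * A)"
    using xi_pos by (intro geom_deriv_mono) auto
  then have "width F0 * D n (cell_right F0 (ancestor F0 \<omega>)) \<le> width F0 * D n (2 * A)"
    using width_pos[of F0] by (intro mult_left_mono) auto
  also have "\<dots> \<le> \<tau>" using fine_depth[OF n] unfolding width_def by simp
  finally show ?thesis unfolding fine_at_def .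
qed

lemma fine_at_fine_level: "n \<le> N \<Longrightarrow> \<omega> < 2 ^ depth \<Longrightarrow> fine_at n \<omega> (fine_level n \<omega>)"
  unfolding fine_level_def by (rule LeastI[of "fine_at n \<omega>", OF fine_F0])

lemma fine_level_le: "n \<le> N \<Longrightarrow> \<omega> < 2 ^ depth \<Longrightarrow> fine_level n \<omega> \<le> F0"
  unfolding fine_level_def by (rule Least_le[of "fine_at n \<omega>", OF fine_F0])

lemma fine_level_le_depth: "n \<le> N \<Longrightarrow> \<omega> < 2 ^ depth \<Longrightarrow> fine_level n \<omega> \<le> depth"
  using fine_level_le[of n \<omega>] unfolding depth_def by linarith

lemma coarse_at_fine_level: "n \<le> N \<Longrightarrow> \<omega> < 2 ^ depth \<Longrightarrow> coarse_at n \<omega> (fine_level n \<omega>)"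
  using fine_at_fine_level[of n \<omega>] tau_le unfolding fine_at_def coarse_at_def by linarith

lemma coarse_at_coarse_level: "n \<le> N \<Longrightarrow> \<omega> < 2 ^ depth \<Longrightarrow> coarse_at n \<omega> (coarse_level n \<omega>)"
  unfolding coarse_level_def by (rule LeastI[of "coarse_at n \<omega>", OF coarse_at_fine_level])

lemma coarse_level_le: "n \<le> N \<Longrightarrow> \<omega> < 2 ^ depth \<Longrightarrow> coarse_level n \<omega> \<le> fine_level n \<omega>"
  unfolding coarse_level_def by (rule Least_le[of "coarse_at n \<omega>", OF coarse_at_fine_level])

lemma ancestor_eq_if_le:
  "k \<le> m \<Longrightarrow> m \<le> depth \<Longrightarrow> ancestor m \<omega> = ancestor m \<omega>' \<Longrightarrow> ancestor k \<omega> = ancestor k \<omega>'"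
  using ancestor_ancestor by metis

lemma coarse_level_le_F0: "n \<le> N \<Longrightarrow> \<omega> < 2 ^ depth \<Longrightarrow> coarse_level n \<omega> \<le> F0"
  using coarse_level_le fine_level_le le_trans by blast

lemma coarse_level_le_depth: "n \<le> N \<Longrightarrow> \<omega> < 2 ^ depth \<Longrightarrow> coarse_level n \<omega> \<le> depth"
  using coarse_level_le_F0[of n \<omega>] unfolding depth_def by linarith

lemma bad_subset: "bad n \<subseteq> {..<2 ^ depth}"
  unfolding bad_def by auto

lemma bad_leaf_near_int:
  assumes "\<omega> \<in> bad n"
  shows "near_int (2 * \<tau>) (g n (cell_left depth \<omega>))"
proof -
  have n: "n \<le> N" and \<omega>: "\<omega> < 2 ^ depth" using assms unfolding bad_def by (auto split: if_splits)
  define k where "k = fine_level n \<omega>"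
  obtain e z where e: "e \<in> level_interval k \<omega>" and z: "\<bar>g n e - of_int z\<bar> < \<tau>"
    using assms n unfolding bad_def near_int_def k_def by (auto split: if_splits)
  have "cell_left depth \<omega> \<in> level_interval k \<omega>"
    using cell_left_depth_in_level_interval fine_level_le_depth[OF n \<omega>] unfolding k_def by blast
  then have "\<bar>g n (cell_left depth \<omega>) - g n e\<bar>
      \<le> (cell_right k (ancestor k \<omega>) - cell_left k (ancestor k \<omega>)) * D n (cell_right k (ancestor k \<omega>))"
    using e xi_pos cell_left_nonneg unfolding level_interval_def by (intro abs_geom_diff_le) auto
  also have "\<dots> = width k * D n (cell_right k (ancestor k \<omega>))" by (simp add: cell_right_def)
  also have "\<dots> \<le> \<tau>" using fine_at_fine_level[OF n \<omega>] unfolding k_def fine_at_def .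
  finally show ?thesis using z unfolding near_int_def by (intro exI[of _ z]) linarith
qed

lemma card_cell_ge: "c < 2 ^ m \<Longrightarrow> m \<le> depth \<Longrightarrow> 2 ^ (depth - m) \<le> card (cell m c)"
proof -
  assume c: "c < 2 ^ m" and m: "m \<le> depth"
  define R where "R = (2::nat) ^ (depth - m)"
  have "(\<lambda>t. c * R + t) ` {..<R} \<subseteq> cell m c"
  proof
    fix \<omega> assume "\<omega> \<in> (\<lambda>t. c * R + t) ` {..<R}"
    then obtain t where t: "t < R" "\<omega> = c * R + t" by auto
    have "c * R + t < (c + 1) * R" using t by simp
    also have "\<dots> \<le> 2 ^ m * R" using c by (intro mult_right_mono) auto
    also have "\<dots> = 2 ^ depth" unfolding R_def using m by (simp add: power_add[symmetric])
    finally show "\<omega> \<in> cell m c" using t unfolding cell_def ancestor_def R_def by simp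
  qed
  moreover have "card ((\<lambda>t. c * R + t) ` {..<R}) = R" by (subst card_image) (auto simp: inj_on_def)
  moreover have "finite (cell m c)" unfolding cell_def by simp
  ultimately show ?thesis using card_mono R_def by metis
qed

lemma bad_cell_subset:
  assumes "m \<le> depth"
  shows "bad n \<inter> cell m c \<subseteq> (\<lambda>t. c * 2 ^ (depth - m) + t) `
    {t. t < 2 ^ (depth - m) \<and> near_int (2 * \<tau>) (g n (cell_left m c + real t * width depth))}"
proof
  fix \<omega> assume \<omega>: "\<omega> \<in> bad n \<inter> cell m c"
  then have "ancestor m \<omega> = c" unfolding cell_def by auto
  then have "\<omega> = c * 2 ^ (depth - m) + \<omega> mod 2 ^ (depth - m)"
    unfolding ancestor_def by (metis div_mult_mod_eq)
  moreover have "near_int (2 * \<tau>) (g n (cell_left m c + real (\<omega> mod 2 ^ (depth - m)) * width depth))"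
    using bad_leaf_near_int[of \<omega> n] \<omega> cell_left_depth_eq[OF assms, of \<omega>] \<open>ancestor m \<omega> = c\<close> by simp
  ultimately show "\<omega> \<in> (\<lambda>t. c * 2 ^ (depth - m) + t) `
    {t. t < 2 ^ (depth - m) \<and> near_int (2 * \<tau>) (g n (cell_left m c + real t * width depth))}"
    by (intro image_eqI) auto
qed

text \<open>
  Within a cell the leaves sample \<open>geom \<xi> \<eta> n\<close> along an arithmetic progression, so the
  leaves of \<open>bad n\<close> are counted by \<open>slope_bounded.card_near_integers_le\<close>.
\<close>

lemma card_bad_cell_le:
  assumes n: "1 \<le> n" and m: "m \<le> depth"
  shows "real (card (bad n \<inter> cell m c)) \<le> 8 * \<tau> * 2 ^ (depth - m)
    + 2 * (width m * D n (cell_right m c) + 5) + 8 * \<tau> / (width depth * D n (cell_left m c))"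
proof -
  define R :: nat where "R = 2 ^ (depth - m)"
  define y where "y t = g n (cell_left m c + real t * width depth)" for t :: nat
  define dl where "dl t = width depth * D n (cell_left m c + real t * width depth)" for t :: nat
  interpret slope_bounded y dl R
    unfolding y_def dl_def using xi_pos n cell_left_nonneg width_pos by (intro slope_bounded_geom)
  have "card (bad n \<inter> cell m c) \<le> card ((\<lambda>t. c * R + t) ` {t. t < R \<and> near_int (2 * \<tau>) (y t)})"
    using bad_cell_subset[OF m, of n c] unfolding R_def y_def by (intro card_mono) auto
  also have "\<dots> \<le> card {t. t < R \<and> near_int (2 * \<tau>) (y t)}" by (rule card_image_le) simp
  finally have "real (card (bad n \<inter> cell m c)) \<le> 4 * (2 * \<tau>) * R + 2 * (y (R - 1) - y 0 + 5) + 4 * (2 * \<tau>) / dl 0"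
    using card_near_integers_le[of "2 * \<tau>"] tau_pos tau_le unfolding R_def by simp
  moreover have "y (R - 1) - y 0 \<le> width m * D n (cell_right m c)"
  proof -
    have step: "real (R - 1) * width depth \<le> width m"
      unfolding width_eq[OF m] R_def using width_pos[of depth] by (intro mult_right_mono) auto
    have "y (R - 1) - y 0 \<le> real (R - 1) * dl (R - 1)" using slope_upper[of 0 "R - 1"] unfolding R_def by simp
    also have "\<dots> = real (R - 1) * width depth * D n (cell_left m c + real (R - 1) * width depth)"
      unfolding dl_def by simp
    also have "\<dots> \<le> width m * D n (cell_right m c)"
      using step xi_pos cell_left_nonneg width_pos[of depth] width_pos[of m]
      by (intro mult_mono geom_deriv_mono geom_deriv_nonneg) (auto simp: cell_right_def)
    finally show ?thesis .
  qed
  ultimately show ?thesis unfolding dl_def R_def by simp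
qed

lemma bad_cell_empty:
  assumes "m \<le> depth"
    and "\<not> (\<exists>t<2 ^ (depth - m). near_int (2 * \<tau>) (g n (cell_left m c + real t * width depth)))"
  shows "bad n \<inter> cell m c = {}"
  using bad_cell_subset[OF assms(1), of n c] assms(2) by blast

lemma steep_coarse_width_small:
  assumes i: "Nst < i" "i \<le> N" and \<omega>: "\<omega> < 2 ^ depth"
  shows "real i * width (coarse_level i \<omega>) \<le> 1/2"
proof -
  define m where "m = coarse_level i \<omega>"
  have "A \<le> cell_right m (ancestor m \<omega>)" using cell_left_ge cell_left_le_right order_trans by blast
  then have "width m * D i A \<le> width m * D i (cell_right m (ancestor m \<omega>))"
    using xi_pos A_pos width_pos[of m] by (intro mult_left_mono geom_deriv_mono) auto
  also have "\<dots> \<le> 8" using coarse_at_coarse_level[OF i(2) \<omega>] unfolding coarse_at_def m_def by simp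
  finally have "(real i * width m) * (\<xi> * (1 + A) ^ (i - 1)) \<le> 8"
    unfolding geom_deriv_def by (simp add: algebra_simps)
  moreover have "(real i * width m) * 16 \<le> (real i * width m) * (\<xi> * (1 + A) ^ (i - 1))"
    using steep[OF i(1)] width_pos[of m] by (intro mult_left_mono) auto
  ultimately show ?thesis unfolding m_def by linarith
qed

text \<open>
  On the coarse cell of a steep index the derivative is large: one level up the variation
  exceeded 8, and across that parent cell the derivative changes by a factor at most 3.
\<close>

lemma coarse_cell_deriv_ge:
  assumes i: "Nst < i" "i \<le> N" and \<omega>: "\<omega> < 2 ^ depth"
  defines "m \<equiv> coarse_level i \<omega>"
  shows "1 \<le> width m * D i (cell_left m (ancestor m \<omega>))"
proof (cases m)
  case 0
  have "1 \<le> A * \<xi> * real i" using steep_linear[OF i(1)] .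
  also have "\<dots> \<le> A * D i A"
    using geom_deriv_ge_linear[of \<xi> A i] xi_pos A_pos by (simp add: mult.assoc mult_left_mono)
  also have "\<dots> \<le> width m * D i (cell_left m (ancestor m \<omega>))"
    using 0 A_pos xi_pos cell_left_ge[of m] by (simp add: width_def mult_left_mono geom_deriv_mono)
  finally show ?thesis .
next
  case (Suc m')
  define c where "c = ancestor m \<omega>"
  define c' where "c' = ancestor m' \<omega>"
  have c': "c' = c div 2"
    unfolding c'_def c_def using ancestor_ancestor[of m' m \<omega>] coarse_level_le_depth[OF i(2) \<omega>] Suc m_def
    by simp
  have "\<not> coarse_at i \<omega> m'"
    using not_less_Least[of m' "coarse_at i \<omega>"] Suc unfolding m_def coarse_level_def by simp
  then have parent: "8 < width m' * D i (cell_right m' c')" unfolding coarse_at_def c'_def by simp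
  have "real (i - 1) * width m' \<le> real i * width m'"
    using width_pos[of m'] by (intro mult_right_mono) auto
  also have "\<dots> = 2 * (real i * width m)" using width_Suc[of m'] Suc by simp
  finally have "real (i - 1) * width m' \<le> 1"
    using steep_coarse_width_small[OF i \<omega>] unfolding m_def by linarith
  then have "D i (cell_right m' c') \<le> 3 * D i (cell_left m' c')"
    unfolding cell_right_def using xi_pos cell_left_nonneg width_pos[of m']
    by (intro geom_deriv_shift_le) auto
  also have "\<dots> \<le> 3 * D i (cell_left m c)"
    using cell_left_parent_le[of m' c] xi_pos cell_left_nonneg unfolding c' Suc
    by (intro mult_left_mono geom_deriv_mono) auto
  finally have "width m' * D i (cell_right m' c') \<le> width m' * (3 * D i (cell_left m c))"
    using width_pos[of m'] by (intro mult_left_mono) auto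
  also have "\<dots> = 6 * (width m * D i (cell_left m c))" using width_Suc[of m'] Suc by simp
  finally show ?thesis using parent unfolding c_def by linarith
qed

lemma cell_0_0: "cell 0 0 = {..<2 ^ depth}"
  unfolding cell_def using ancestor_0 by auto

lemma card_bad_le_root_bound:
  assumes i: "1 \<le> i" "i \<le> N"
  shows "real (card (bad i)) \<le> root_bound \<xi> \<eta> A \<tau> i * 2 ^ depth"
proof -
  have bad_eq: "bad i = bad i \<inter> cell 0 0" using bad_subset cell_0_0 by auto
  have leaf_in: "cell_left 0 0 + real t * width depth \<in> {A..2 * A}" if "t < 2 ^ depth" for t
  proof -
    have "real t * width depth \<le> 2 ^ depth * width depth"
      using that width_pos[of depth] by (intro mult_right_mono) auto
    moreover have "0 \<le> real t * width depth" using width_pos[of depth] by simp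
    moreover have "2 ^ depth * width depth = A" unfolding width_def by simp
    ultimately show ?thesis unfolding cell_left_def by simp
  qed
  show ?thesis
  proof (cases "\<exists>e\<in>{A..2 * A}. near_int (2 * \<tau>) (g i e)")
    case True
    then have root: "root_bound \<xi> \<eta> A \<tau> i = 9 * \<tau> + 8 * \<tau> / (A * D i A)"
      unfolding root_bound_def by simp
    have "D i (2 * A) \<le> D N (2 * A)" using i xi_pos A_pos by (intro geom_deriv_mono_index) auto
    then have "A * D i (2 * A) \<le> A * D N (2 * A)" using A_pos by (intro mult_left_mono) auto
    moreover have "width 0 = A" "cell_right 0 0 = 2 * A"
      unfolding cell_right_def cell_left_def width_def by simp_all
    ultimately have "2 * (width 0 * D i (cell_right 0 0) + 5) \<le> \<tau> * 2 ^ depth"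
      using total_depth unfolding depth_def by simp
    moreover have "8 * \<tau> / (width depth * D i (cell_left 0 0)) = 8 * \<tau> / (A * D i A) * 2 ^ depth"
      unfolding cell_left_def width_def by simp
    ultimately show ?thesis
      using card_bad_cell_le[OF i(1), of 0 0] unfolding root bad_eq[symmetric]
      by (simp add: algebra_simps)
  next
    case False
    then have "bad i = {}" using leaf_in by (subst bad_eq) (intro bad_cell_empty; auto)
    then show ?thesis using root_bound_nonneg[of \<xi> A \<tau> \<eta> i] xi_pos A_pos tau_pos by simp
  qed
qed

lemma coarse_level_eq_cell:
  assumes i: "i \<le> N" and \<omega>0: "\<omega>0 < 2 ^ depth"
  defines "m \<equiv> coarse_level i \<omega>0"
  shows "{\<omega>. \<omega> < 2 ^ depth \<and> coarse_level i \<omega> = m \<and> ancestor m \<omega> = ancestor m \<omega>0}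
    = cell m (ancestor m \<omega>0)"
proof (intro equalityI subsetI)
  fix \<omega> assume "\<omega> \<in> cell m (ancestor m \<omega>0)"
  then have \<omega>: "\<omega> < 2 ^ depth" "ancestor m \<omega> = ancestor m \<omega>0" unfolding cell_def by auto
  have "coarse_level i \<omega>0 = coarse_level i \<omega>" unfolding coarse_level_def
  proof (rule Least_eq_Least_if_agree)
    show "coarse_at i \<omega>0 k \<longleftrightarrow> coarse_at i \<omega> k" if "k \<le> m" for k
      using ancestor_eq_if_le[OF that coarse_level_le_depth[OF i \<omega>0, folded m_def] \<omega>(2)[symmetric]]
      unfolding coarse_at_def m_def by simp
    show "coarse_at i \<omega>0 m" unfolding m_def by (rule coarse_at_coarse_level[OF i \<omega>0])
  qed
  then show "\<omega> \<in> {\<omega>. \<omega> < 2 ^ depth \<and> coarse_level i \<omega> = m \<and> ancestor m \<omega> = ancestor m \<omega>0}"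
    using \<omega> unfolding m_def by simp
qed (auto simp: cell_def)

lemma card_bad_coarse_cell_le:
  assumes i: "Nst < i" "i \<le> N" and \<omega>0: "\<omega>0 < 2 ^ depth"
  defines "m \<equiv> coarse_level i \<omega>0"
  defines "c \<equiv> ancestor m \<omega>0"
  shows "real (card (bad i \<inter> cell m c)) \<le> 17 * \<tau> * real (card (cell m c))"
proof -
  define R :: nat where "R = 2 ^ (depth - m)"
  have m: "m \<le> F0" "m \<le> depth"
    unfolding m_def using coarse_level_le_F0[OF i(2) \<omega>0] coarse_level_le_depth[OF i(2) \<omega>0] by auto
  have "(2::nat) ^ E \<le> R" unfolding R_def depth_def using m by (intro power_increasing) auto
  then have "(2::real) ^ E \<le> real R" by (metis of_nat_le_iff of_nat_numeral of_nat_power)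
  then have "26 \<le> \<tau> * real R"
    using extra_depth mult_left_mono[of "2 ^ E" "real R" \<tau>] tau_pos by linarith
  moreover have "width m * D i (cell_right m c) \<le> 8"
    using coarse_at_coarse_level[OF i(2) \<omega>0] unfolding coarse_at_def m_def c_def .
  moreover have "8 * \<tau> / (width depth * D i (cell_left m c)) \<le> 8 * \<tau> * real R"
  proof -
    have pos: "0 < D i (cell_left m c)" using xi_pos cell_left_nonneg i by (intro geom_deriv_pos) auto
    have "8 * \<tau> / (width depth * D i (cell_left m c)) = 8 * \<tau> * real R / (width m * D i (cell_left m c))"
      unfolding width_eq[OF m(2)] R_def using width_pos[of depth] pos by (simp add: field_simps)
    also have "\<dots> \<le> 8 * \<tau> * real R / 1"
      using coarse_cell_deriv_ge[OF i \<omega>0] tau_pos unfolding m_def c_def by (intro divide_left_mono) auto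
    finally show ?thesis by simp
  qed
  ultimately have "real (card (bad i \<inter> cell m c)) \<le> 17 * \<tau> * real R"
    using card_bad_cell_le[of i m c] i m unfolding R_def by simp
  also have "\<dots> \<le> 17 * \<tau> * real (card (cell m c))"
    using card_cell_ge[OF _ m(2), of c] ancestor_less[OF \<omega>0 m(2)] tau_pos
    unfolding R_def c_def by (intro mult_left_mono) auto
  finally show ?thesis .
qed

text \<open>
  Going back \<open>d\<close> or more indices shrinks the derivative by the factor \<open>(1 + A) ^ d \<ge> 8 / \<tau>\<close>,
  so on the coarse cell of \<open>i\<close> every earlier \<open>geom \<xi> \<eta> j\<close> with \<open>j + d \<le> i\<close> is already fine.
\<close>

lemma fine_at_coarse_level:
  assumes i: "i \<le> N" and j: "1 \<le> j" "j + d \<le> i" and \<omega>: "\<omega> < 2 ^ depth"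
  shows "fine_at j \<omega> (coarse_level i \<omega>)"
proof -
  define m where "m = coarse_level i \<omega>"
  define r where "r = cell_right m (ancestor m \<omega>)"
  have r: "A \<le> r" unfolding r_def using cell_left_ge cell_left_le_right order_trans by blast
  have Dj: "0 \<le> width m * D j r" using width_pos[of m] xi_pos A_pos r by (simp add: geom_deriv_nonneg)
  have "width m * D j r * 8 \<le> width m * D j r * (\<tau> * (1 + A) ^ d)"
    using lag_growth Dj by (intro mult_left_mono) auto
  also have "\<dots> \<le> \<tau> * (width m * (D j r * (1 + A) ^ (i - j)))"
    using mult_left_mono[of "(1 + A) ^ d" "(1 + A) ^ (i - j)" "\<tau> * (width m * D j r)"]
      power_increasing[of d "i - j" "1 + A"] j A_pos tau_pos Dj
    by (simp add: algebra_simps)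
  also have "\<dots> \<le> \<tau> * (width m * D i r)"
    using geom_deriv_ratio[of \<xi> j i A r] j r xi_pos A_pos width_pos[of m] tau_pos
    by (intro mult_left_mono) auto
  also have "\<dots> \<le> \<tau> * 8"
    using coarse_at_coarse_level[OF i \<omega>] tau_pos unfolding coarse_at_def m_def r_def by (intro mult_left_mono) auto
  finally show ?thesis unfolding fine_at_def m_def r_def by simp
qed

lemma bad_saturated:
  assumes i: "Nst + d < i" "i \<le> N" and j: "j < i - d"
    and \<omega>: "\<omega> < 2 ^ depth" "\<omega>' < 2 ^ depth" and colour: "colour i \<omega> = colour i \<omega>'"
    and bad: "\<omega> \<in> bad j"
  shows "\<omega>' \<in> bad j"
proof -
  have j1: "1 \<le> j" "j \<le> N" using bad j i unfolding bad_def by (auto split: if_splits)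
  define m where "m = coarse_level i \<omega>"
  have m: "coarse_level i \<omega>' = m" "ancestor m \<omega>' = ancestor m \<omega>"
    using colour i unfolding colour_def colour_level_def m_def by (auto split: if_splits)
  have ancestors: "ancestor k \<omega> = ancestor k \<omega>'" if "k \<le> m" for k
    using ancestor_eq_if_le[OF that _ m(2)[symmetric]] coarse_level_le_depth[OF i(2) \<omega>(1)]
    unfolding m_def by blast
  have fine: "fine_at j \<omega> m" unfolding m_def using i j j1 \<omega> by (intro fine_at_coarse_level) auto
  have "fine_level j \<omega> = fine_level j \<omega>'" unfolding fine_level_def
    by (rule Least_eq_Least_if_agree[where m=m]) (use ancestors fine in \<open>auto simp: fine_at_def\<close>)
  moreover have "fine_level j \<omega> \<le> m" unfolding fine_level_def using fine by (rule Least_le)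
  ultimately have "level_interval (fine_level j \<omega>') \<omega>' = level_interval (fine_level j \<omega>) \<omega>"
    using ancestors unfolding level_interval_def by simp
  then show ?thesis using bad \<omega>(2) j1 unfolding bad_def by auto
qed

lemma prob_nonneg: "0 \<le> prob n"
  unfolding prob_def using root_bound_nonneg[of \<xi> A \<tau> \<eta> n] xi_pos A_pos tau_pos by auto

lemma root_bound_le: "1 \<le> n \<Longrightarrow> n \<le> Nst \<Longrightarrow> root_bound \<xi> \<eta> A \<tau> n \<le> 1/8"
proof -
  assume "1 \<le> n" "n \<le> Nst"
  then have "root_bound \<xi> \<eta> A \<tau> n \<le> (\<Sum>n\<in>{1..Nst}. root_bound \<xi> \<eta> A \<tau> n)"
    using root_bound_nonneg xi_pos A_pos tau_pos by (intro member_le_sum) auto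
  then show ?thesis using roots_small by linarith
qed

lemma weight_less_1: "weight n < 1"
  using root_bound_le[of n] tau_le unfolding weight_def prob_def by auto

lemma weight_le:
  "weight j \<le> (if 1 \<le> j \<and> j \<le> Nst then 2 * root_bound \<xi> \<eta> A \<tau> j else 0) + (if Nst < j then 34 * \<tau> else 0)"
  unfolding weight_def prob_def using root_bound_nonneg[of \<xi> A \<tau> \<eta> j] xi_pos A_pos tau_pos by auto

lemma card_steep_nbhd_le: "card ({nbhd_start i..<i} \<inter> {j. Nst < j}) \<le> d"
proof (cases "i \<le> Nst + d")
  case True
  then have "{nbhd_start i..<i} \<inter> {j. Nst < j} \<subseteq> {Nst<..<Nst + d}" by auto
  then have "card ({nbhd_start i..<i} \<inter> {j. Nst < j}) \<le> card {Nst<..<Nst + d}"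
    by (intro card_mono) auto
  then show ?thesis by simp
next
  case False
  then have "{nbhd_start i..<i} \<inter> {j. Nst < j} \<subseteq> {i - d..<i}" unfolding nbhd_start_def by auto
  then have "card ({nbhd_start i..<i} \<inter> {j. Nst < j}) \<le> card {i - d..<i}"
    by (intro card_mono) auto
  then show ?thesis by simp
qed

lemma sum_weight_nbhd_le: "(\<Sum>j\<in>{nbhd_start i..<i}. weight j) \<le> 1/2"
proof -
  let ?I = "{nbhd_start i..<i}"
  have "(\<Sum>j\<in>?I. if 1 \<le> j \<and> j \<le> Nst then 2 * root_bound \<xi> \<eta> A \<tau> j else 0)
      = (\<Sum>j\<in>?I \<inter> {1..Nst}. 2 * root_bound \<xi> \<eta> A \<tau> j)"
    using sum.inter_restrict[of ?I "\<lambda>j. 2 * root_bound \<xi> \<eta> A \<tau> j" "{1..Nst}"] by simp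
  also have "\<dots> \<le> (\<Sum>j\<in>{1..Nst}. 2 * root_bound \<xi> \<eta> A \<tau> j)"
    using root_bound_nonneg xi_pos A_pos tau_pos by (intro sum_mono2) auto
  also have "\<dots> \<le> 1/4" using roots_small by (simp add: sum_distrib_left[symmetric])
  finally have roots: "(\<Sum>j\<in>?I. if 1 \<le> j \<and> j \<le> Nst then 2 * root_bound \<xi> \<eta> A \<tau> j else 0) \<le> 1/4" .
  have "(\<Sum>j\<in>?I. if Nst < j then 34 * \<tau> else 0) = (\<Sum>j\<in>?I \<inter> {j. Nst < j}. 34 * \<tau>)"
    using sum.inter_restrict[of ?I "\<lambda>_. 34 * \<tau>" "{j. Nst < j}"] by simp
  also have "\<dots> = 34 * \<tau> * real (card (?I \<inter> {j. Nst < j}))" by simp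
  also have "\<dots> \<le> 34 * \<tau> * real d" using card_steep_nbhd_le[of i] tau_pos by (intro mult_left_mono) auto
  finally have steep: "(\<Sum>j\<in>?I. if Nst < j then 34 * \<tau> else 0) \<le> 1/4" using lag_small by linarith
  have "(\<Sum>j\<in>?I. weight j) \<le> (\<Sum>j\<in>?I. (if 1 \<le> j \<and> j \<le> Nst then 2 * root_bound \<xi> \<eta> A \<tau> j else 0)
      + (if Nst < j then 34 * \<tau> else 0))"
    by (rule sum_mono) (rule weight_le)
  also have "\<dots> \<le> 1/2" using roots steep by (simp add: sum.distrib)
  finally show ?thesis .
qed

lemma bad_fibre_density:
  "real (card (bad i \<inter> {\<omega>\<in>{..<2 ^ depth}. colour i \<omega> = b}))
    \<le> prob i * real (card {\<omega>\<in>{..<2 ^ depth}. colour i \<omega> = b})"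
proof (cases "i = 0 \<or> N < i")
  case True
  then show ?thesis unfolding bad_def prob_def by simp
next
  case in_range: False
  show ?thesis
  proof (cases "i \<le> Nst")
    case True
    have colour: "colour i \<omega> = (0, 0)" if "\<omega> < 2 ^ depth" for \<omega>
      unfolding colour_def colour_level_def using in_range True ancestor_0[OF that] by simp
    have "bad i \<inter> {..<2 ^ depth} = bad i" using bad_subset by auto
    then have "real (card (bad i \<inter> {..<2 ^ depth})) \<le> prob i * real (card {..<(2::nat) ^ depth})"
      using card_bad_le_root_bound[of i] in_range True unfolding prob_def by simp
    moreover have "{\<omega>\<in>{..<2 ^ depth}. colour i \<omega> = b} = (if b = (0, 0) then {..<2 ^ depth} else {})"
      using colour by auto
    ultimately show ?thesis using prob_nonneg[of i] by simp
  next
    case False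
    have colour: "colour i \<omega> = (coarse_level i \<omega>, ancestor (coarse_level i \<omega>) \<omega>)" for \<omega>
      unfolding colour_def colour_level_def using in_range False by simp
    show ?thesis
    proof (cases "{\<omega>\<in>{..<2 ^ depth}. colour i \<omega> = b} = {}")
      case nonempty: False
      then obtain \<omega>0 where \<omega>0: "\<omega>0 < 2 ^ depth" "colour i \<omega>0 = b" by auto
      define m where "m = coarse_level i \<omega>0"
      have "{\<omega>\<in>{..<2 ^ depth}. colour i \<omega> = b}
          = {\<omega>. \<omega> < 2 ^ depth \<and> coarse_level i \<omega> = m \<and> ancestor m \<omega> = ancestor m \<omega>0}"
        using \<omega>0(2) unfolding colour m_def by auto
      also have "\<dots> = cell m (ancestor m \<omega>0)"
        unfolding m_def using in_range \<omega>0 by (intro coarse_level_eq_cell) auto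
      finally have fibre: "{\<omega>\<in>{..<2 ^ depth}. colour i \<omega> = b} = cell m (ancestor m \<omega>0)" .
      have "prob i = 17 * \<tau>" unfolding prob_def using in_range False by simp
      then show ?thesis unfolding fibre m_def
        using card_bad_coarse_cell_le[of i \<omega>0] in_range False \<omega>0(1) by simp
    next
      case True
      show ?thesis unfolding True by simp
    qed
  qed
qed

lemma bad_saturated_outside_nbhd:
  assumes "j < nbhd_start i" "\<omega> < 2 ^ depth" "\<omega>' < 2 ^ depth" "colour i \<omega> = colour i \<omega>'"
    and "\<omega> \<in> bad j"
  shows "\<omega>' \<in> bad j"
proof (cases "N < i")
  case True
  then have "colour i \<omega> = (\<omega>, 0)" "colour i \<omega>' = (\<omega>', 0)" unfolding colour_def by simp_all
  then show ?thesis using assms(4,5) by (metis prod.inject)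
next
  case False
  have "\<not> i \<le> Nst + d" using assms(1) unfolding nbhd_start_def by auto
  then have "Nst + d < i" "j < i - d" using assms(1) unfolding nbhd_start_def by auto
  then show ?thesis using False by (intro bad_saturated[OF _ _ _ assms(2-5)]) auto
qed

sublocale counting_local_lemma "{..<2 ^ depth}" bad colour prob weight nbhd_start
proof
  show "prob i \<le> weight i * (1 - (\<Sum>j\<in>{nbhd_start i..<i}. weight j))" for i
    using mult_left_mono[of "1/2" "1 - (\<Sum>j\<in>{nbhd_start i..<i}. weight j)" "weight i"]
      sum_weight_nbhd_le[of i] prob_nonneg[of i] unfolding weight_def by simp
next
  show "finite {..<(2::nat) ^ depth}" by simp
  show "real (card (bad i \<inter> {\<omega> \<in> {..<2 ^ depth}. colour i \<omega> = b}))
      \<le> prob i * real (card {\<omega> \<in> {..<2 ^ depth}. colour i \<omega> = b})" for i b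
    by (rule bad_fibre_density)
  show "\<omega>' \<in> bad j" if "j < nbhd_start i" "\<omega> \<in> {..<2 ^ depth}" "\<omega>' \<in> {..<2 ^ depth}"
    "colour i \<omega> = colour i \<omega>'" "\<omega> \<in> bad j" for i j \<omega> \<omega>'
    by (rule bad_saturated_outside_nbhd[OF that(1) _ _ that(4,5)]) (use that in auto)
  show "0 \<le> weight i" for i using prob_nonneg[of i] by (simp add: weight_def)
  show "weight i \<le> 1" for i using weight_less_1[of i] by simp
qed

theorem exists_good_point:
  "\<exists>e\<in>{A..2 * A}. \<forall>n. 1 \<le> n \<longrightarrow> n \<le> N \<longrightarrow> \<tau> \<le> dist_int (g n e)"
proof -
  have "0 < (\<Prod>j<Suc N. 1 - weight j) * real (card {..<(2::nat) ^ depth})"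
    using weight_less_1 by (intro mult_pos_pos prod_pos) auto
  then have "survivors {..<Suc N} \<noteq> {}" using card_survivors_ge[of "Suc N"] by auto
  then obtain \<omega> where "\<omega> \<in> survivors {..<Suc N}" by blast
  then have \<omega>: "\<omega> < 2 ^ depth" and good: "\<And>n. n \<le> N \<Longrightarrow> \<omega> \<notin> bad n"
    unfolding survivors_def by auto
  have "cell_left depth \<omega> \<in> {A..2 * A}"
    using cell_left_ge[of depth \<omega>] cell_right_le[of \<omega> depth] cell_left_le_right[of depth \<omega>] \<omega> by auto
  moreover have "\<tau> \<le> dist_int (g n (cell_left depth \<omega>))" if n: "1 \<le> n" "n \<le> N" for n
  proof (rule ccontr)
    assume "\<not> \<tau> \<le> dist_int (g n (cell_left depth \<omega>))"
    then have "near_int \<tau> (g n (cell_left depth \<omega>))" unfolding dist_int_ge_iff_not_near_int by simp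
    moreover have "cell_left depth \<omega> \<in> level_interval (fine_level n \<omega>) \<omega>"
      using cell_left_depth_in_level_interval fine_level_le_depth[OF n(2) \<omega>] by blast
    ultimately have "\<omega> \<in> bad n" using \<omega> n unfolding bad_def by auto
    then show False using good[OF n(2)] by contradiction
  qed
  ultimately show ?thesis by blast
qed

end

lemma closed_dist_int_ge: "closed {x. t \<le> dist_int x}"
proof -
  have "{x. t \<le> dist_int x} = (\<Inter>z::int. {x. t \<le> \<bar>x - of_int z\<bar>})"
    unfolding dist_int_ge_iff_not_near_int near_int_def by (auto simp: not_less)
  then show ?thesis by (auto intro!: closed_Collect_le continuous_intros)
qed

lemma exists_good_point_limit:
  assumes "\<And>N. \<exists>e\<in>{a..b}. \<forall>n. 1 \<le> n \<longrightarrow> n \<le> N \<longrightarrow> \<tau> \<le> dist_int (geom \<xi> \<eta> n e)"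
  shows "\<exists>e\<in>{a..b}. \<forall>n. 1 \<le> n \<longrightarrow> \<tau> \<le> dist_int (geom \<xi> \<eta> n e)"
proof -
  define K where "K N = {a..b} \<inter> (\<Inter>n\<in>{1..N}. geom \<xi> \<eta> n -` {x. \<tau> \<le> dist_int x})" for N
  have "closed (geom \<xi> \<eta> n -` {x. \<tau> \<le> dist_int x})" for n
    unfolding geom_def by (intro continuous_closed_vimage closed_dist_int_ge continuous_intros)
  then have "compact (K N)" for N unfolding K_def by (intro compact_Int_closed compact_Icc closed_INT) auto
  moreover have "K N \<noteq> {}" for N using assms[of N] unfolding K_def by auto
  moreover have "K N \<subseteq> K M" if "M \<le> N" for M N using that unfolding K_def by auto
  ultimately have "\<Inter>(range K) \<noteq> {}" by (rule compact_nest)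
  then obtain e where e: "\<And>N. e \<in> K N" by blast
  have "\<tau> \<le> dist_int (geom \<xi> \<eta> n e)" if "1 \<le> n" for n
    using e[of n] that unfolding K_def by auto
  moreover have "e \<in> {a..b}" using e[of 0] unfolding K_def by auto
  ultimately show ?thesis by blast
qed

lemma exists_good_point_at_scale:
  assumes xi: "0 < \<xi>" and A: "0 < A" and tau: "0 < \<tau>" "\<tau> \<le> 1/64"
    and steep: "\<And>n. Nst < n \<Longrightarrow> 16 \<le> \<xi> * (1 + A) ^ (n - 1)"
    and steep_linear: "\<And>n. Nst < n \<Longrightarrow> 1 \<le> A * \<xi> * real n"
    and lag_growth: "8 \<le> \<tau> * (1 + A) ^ d"
    and lag_small: "34 * \<tau> * real d \<le> 1/4"
    and roots_small: "(\<Sum>n\<in>{1..Nst}. root_bound \<xi> \<eta> A \<tau> n) \<le> 1/8"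
  shows "\<exists>e\<in>{A..2 * A}. \<forall>n. 1 \<le> n \<longrightarrow> \<tau> \<le> dist_int (geom \<xi> \<eta> n e)"
proof (rule exists_good_point_limit)
  fix N :: nat
  define X where "X = A * geom_deriv \<xi> N (2 * A)"
  have "0 \<le> X" unfolding X_def using A xi geom_deriv_nonneg[of \<xi> "2 * A" N] by simp
  obtain E :: nat where "26 / \<tau> \<le> 2 ^ E" using real_arch_pow[of 2 "26 / \<tau>"] by (auto intro: less_imp_le)
  then have E: "26 \<le> \<tau> * 2 ^ E" using tau by (simp add: field_simps)
  obtain F0 :: nat where "2 * (X + 5) / \<tau> \<le> 2 ^ F0"
    using real_arch_pow[of 2 "2 * (X + 5) / \<tau>"] by (auto intro: less_imp_le)
  then have F0: "2 * (X + 5) \<le> \<tau> * 2 ^ F0" using tau by (simp add: field_simps)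
  interpret dyadic_scale \<xi> A \<tau> \<eta> N Nst d F0 E
  proof
    have "\<tau> * 2 ^ F0 \<le> \<tau> * 2 ^ (F0 + E)" using tau by (intro mult_left_mono power_increasing) auto
    then show "2 * (A * geom_deriv \<xi> N (2 * A) + 5) \<le> \<tau> * 2 ^ (F0 + E)"
      using F0 unfolding X_def by linarith
    show "A / 2 ^ F0 * geom_deriv \<xi> n (2 * A) \<le> \<tau>" if "n \<le> N" for n
    proof -
      have "A * geom_deriv \<xi> n (2 * A) \<le> X"
        unfolding X_def using that xi A by (intro mult_left_mono geom_deriv_mono_index) auto
      then show ?thesis using F0 \<open>0 \<le> X\<close> by (simp add: field_simps)
    qed
  qed (use assms E in auto)
  show "\<exists>e\<in>{A..2 * A}. \<forall>n. 1 \<le> n \<longrightarrow> n \<le> N \<longrightarrow> \<tau> \<le> dist_int (geom \<xi> \<eta> n e)"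
    by (rule exists_good_point)
qed

section \<open>Choosing the scale\<close>

lemma card_le_twice_card_image:
  fixes z :: "nat \<Rightarrow> 'b"
  assumes "finite T"
    and collide: "\<And>s s'. s \<in> T \<Longrightarrow> s' \<in> T \<Longrightarrow> s < s' \<Longrightarrow> z s = z s' \<Longrightarrow> s' = s + 1"
  shows "card T \<le> 2 * card (z ` T)"
proof -
  have fibre: "card {s\<in>T. z s = w} \<le> 2" if "w \<in> z ` T" for w
  proof -
    let ?B = "{s\<in>T. z s = w}"
    define m where "m = Min ?B"
    have "finite ?B" "?B \<noteq> {}" using assms(1) that by auto
    then have m: "m \<in> ?B" "\<And>s. s \<in> ?B \<Longrightarrow> m \<le> s"
      unfolding m_def using Min_in Min_le by blast+
    have "?B \<subseteq> {m, m + 1}"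
    proof
      fix s assume s: "s \<in> ?B"
      show "s \<in> {m, m + 1}"
      proof (cases "m = s")
        case False
        then have "m < s" using m(2)[OF s] by simp
        then show ?thesis using collide[of m s] m(1) s by auto
      qed simp
    qed
    then have "card ?B \<le> card {m, m + 1}" by (intro card_mono) auto
    also have "\<dots> \<le> 2" by (simp add: card_insert_if)
    finally show ?thesis .
  qed
  have "card T = card (\<Union>w\<in>z ` T. {s\<in>T. z s = w})" by (rule arg_cong[where f=card]) auto
  also have "\<dots> \<le> (\<Sum>w\<in>z ` T. card {s\<in>T. z s = w})" by (rule card_UN_le) (use assms(1) in simp)
  also have "\<dots> \<le> (\<Sum>w\<in>z ` T. 2)" by (rule sum_mono) (rule fibre)
  finally show ?thesis by simp
qed

lemma one_plus_power_le_if_flat: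
  assumes xi: "0 < \<xi>" and x: "0 < x" and flat: "x * geom_deriv \<xi> n x < 1"
  shows "(1 + x) ^ (n - 1) \<le> 3 + 1 / \<xi>"
proof (cases "1 \<le> x * real n")
  case True
  have "1 * (\<xi> * (1 + x) ^ (n - 1)) \<le> (x * real n) * (\<xi> * (1 + x) ^ (n - 1))"
    using True xi x by (intro mult_right_mono) auto
  also have "\<dots> = x * geom_deriv \<xi> n x" unfolding geom_deriv_def by (simp add: algebra_simps)
  finally have "\<xi> * (1 + x) ^ (n - 1) < 1" using flat by linarith
  then have "(1 + x) ^ (n - 1) < 1 / \<xi>" using xi by (simp add: field_simps)
  then show ?thesis by linarith
next
  case False
  have "real (n - 1) * x \<le> real n * x" using x by (intro mult_right_mono) auto
  then have "real (n - 1) * x \<le> 1" using False by (simp add: mult.commute)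
  have "(1 + x) ^ (n - 1) \<le> exp (real (n - 1) * x)" using x by (intro one_plus_power_le_exp) auto
  also have "\<dots> \<le> exp 1" using \<open>real (n - 1) * x \<le> 1\<close> by simp
  also have "\<dots> \<le> 3" by (rule exp_le)
  finally show ?thesis using xi by (simp add: add_increasing2)
qed

lemma geom_variation_le_if_flat:
  assumes xi: "0 < \<xi>" and a: "0 \<le> a" "a \<le> 2 * x" and x: "0 < x"
    and flat: "x * geom_deriv \<xi> n x < 1"
  shows "geom \<xi> \<eta> n (2 * x) - geom \<xi> \<eta> n a \<le> 6 + 2 / \<xi>"
proof -
  have "geom \<xi> \<eta> n (2 * x) - geom \<xi> \<eta> n a \<le> (2 * x - a) * geom_deriv \<xi> n (2 * x)"
    using geom_diff_bounds(2) xi a by simp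
  also have "\<dots> \<le> 2 * x * geom_deriv \<xi> n (2 * x)"
    using a x xi geom_deriv_nonneg[of \<xi> "2 * x" n] by (intro mult_right_mono) auto
  also have "\<dots> \<le> 2 * (x * geom_deriv \<xi> n x) * (1 + x) ^ (n - 1)"
  proof -
    have "(1 + 2 * x) ^ (n - 1) \<le> ((1 + x) * (1 + x)) ^ (n - 1)"
      using x by (intro power_mono) (auto simp: algebra_simps)
    then have "(1 + 2 * x) ^ (n - 1) \<le> (1 + x) ^ (n - 1) * (1 + x) ^ (n - 1)"
      by (simp add: power_mult_distrib)
    then have "2 * x * \<xi> * real n * (1 + 2 * x) ^ (n - 1)
        \<le> 2 * x * \<xi> * real n * ((1 + x) ^ (n - 1) * (1 + x) ^ (n - 1))"
      using x xi by (intro mult_left_mono) auto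
    then show ?thesis unfolding geom_deriv_def by (simp add: algebra_simps)
  qed
  also have "\<dots> \<le> 2 * (1 + x) ^ (n - 1)" using flat x by (intro mult_right_mono) auto
  also have "\<dots> \<le> 2 * (3 + 1 / \<xi>)" using one_plus_power_le_if_flat[OF xi x flat] by simp
  finally show ?thesis by (simp add: algebra_simps)
qed

lemma geom_near_same_integer_gap:
  assumes xi: "0 < \<xi>" and n: "1 \<le> n" and x: "0 \<le> x" "x + a \<le> y" and a: "0 \<le> a"
    and "\<bar>geom \<xi> \<eta> n x - z\<bar> < t" "\<bar>geom \<xi> \<eta> n y - z\<bar> < t'"
  shows "a * \<xi> < t + t'"
proof -
  have "\<xi> \<le> \<xi> * real n" using xi n by simp
  also have "\<dots> \<le> geom_deriv \<xi> n x" using geom_deriv_ge_linear xi x by simp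
  finally have "a * \<xi> \<le> a * geom_deriv \<xi> n x" using a by (intro mult_left_mono)
  also have "\<dots> \<le> (y - x) * geom_deriv \<xi> n x"
    using x xi by (intro mult_right_mono geom_deriv_nonneg) auto
  also have "\<dots> \<le> geom \<xi> \<eta> n y - geom \<xi> \<eta> n x" using geom_diff_bounds(1) xi x a by simp
  also have "\<dots> < t + t'" using assms(6,7) by (auto simp: abs_less_iff)
  finally show ?thesis .
qed

definition flat_near :: "real \<Rightarrow> (nat \<Rightarrow> real) \<Rightarrow> real \<Rightarrow> nat \<Rightarrow> real \<Rightarrow> bool" where
  "flat_near \<xi> \<eta> K n A \<longleftrightarrow>
    A * geom_deriv \<xi> n A < 1 \<and> (\<exists>e\<in>{A..2 * A}. near_int (2 * (A / K)) (geom \<xi> \<eta> n e))"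

text \<open>
  Among dyadic scales \<open>2 ^ s * a\<close>, those on which \<open>geom \<xi> \<eta> n\<close> is flat yet comes near an
  integer are few: two of them at least two scales apart are near different integers, since
  \<open>geom \<xi> \<eta> n\<close> increases by at least \<open>a * \<xi>\<close> in between, while on the flat range it moves
  by at most \<open>6 + 2 / \<xi>\<close>.
\<close>

lemma scales_near_same_integer_adjacent:
  assumes xi: "0 < \<xi>" and a: "0 < a" and n: "1 \<le> n" and c: "4 * c \<le> a * \<xi>"
    and s: "s < s'" and e: "2 ^ s * a \<le> e" "e \<le> 2 * (2 ^ s * a)" and e': "2 ^ s' * a \<le> e'"
    and near: "\<bar>geom \<xi> \<eta> n e - z\<bar> < 2 * c" "\<bar>geom \<xi> \<eta> n e' - z\<bar> < 2 * c"
  shows "s' = s + 1"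
proof (rule ccontr)
  assume "s' \<noteq> s + 1"
  then have "(2::real) ^ (s + 2) * a \<le> 2 ^ s' * a"
    using s a by (intro mult_right_mono power_increasing) auto
  moreover have "a \<le> 2 ^ s * a" using a by simp
  ultimately have "e + a \<le> e'" using e e' by (simp add: power_add)
  then have "a * \<xi> < 2 * c + 2 * c"
    using e a xi n near by (intro geom_near_same_integer_gap[where x=e and y=e' and \<eta>=\<eta> and z=z]) auto
  then show False using c by simp
qed

lemma card_near_integers_le_if_flat:
  assumes xi: "0 < \<xi>" and a: "0 < a" "a \<le> x" and flat: "x * geom_deriv \<xi> n x < 1"
    and W: "\<And>w. w \<in> W \<Longrightarrow> \<exists>e\<in>{a..2 * x}. \<bar>geom \<xi> \<eta> n e - of_int w\<bar> < 1"
  shows "real (card W) \<le> 11 + 2 / \<xi>"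
proof -
  have "W \<subseteq> {\<lfloor>geom \<xi> \<eta> n a\<rfloor> - 1 .. \<lceil>geom \<xi> \<eta> n (2 * x)\<rceil> + 1}"
  proof
    fix w assume "w \<in> W"
    then obtain e where "e \<in> {a..2 * x}" "\<bar>geom \<xi> \<eta> n e - of_int w\<bar> < 1" using W by blast
    moreover have "geom \<xi> \<eta> n a \<le> geom \<xi> \<eta> n e" "geom \<xi> \<eta> n e \<le> geom \<xi> \<eta> n (2 * x)"
      using calculation(1) a xi by (auto intro!: geom_mono)
    ultimately show "w \<in> {\<lfloor>geom \<xi> \<eta> n a\<rfloor> - 1 .. \<lceil>geom \<xi> \<eta> n (2 * x)\<rceil> + 1}"
      by (auto simp: abs_less_iff) linarith+
  qed
  moreover have "geom \<xi> \<eta> n a \<le> geom \<xi> \<eta> n (2 * x)" using a xi by (intro geom_mono) auto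
  ultimately have "real (card W) \<le> geom \<xi> \<eta> n (2 * x) - geom \<xi> \<eta> n a + 5"
    by (rule card_int_interval_le)
  also have "\<dots> \<le> 11 + 2 / \<xi>"
    using geom_variation_le_if_flat[OF xi _ _ _ flat, of a \<eta>] a by simp
  finally show ?thesis .
qed

lemma card_flat_near_scales_le:
  assumes xi: "0 < \<xi>" and a: "0 < a" and n: "1 \<le> n"
    and K: "4 \<le> K" and K_xi: "4 * 2 ^ S \<le> K * \<xi>" and S_a: "2 ^ S * a \<le> 1"
  shows "real (card {s. s < S \<and> flat_near \<xi> \<eta> K n (2 ^ s * a)}) \<le> 22 + 4 / \<xi>"
proof -
  define A where "A s = (2::real) ^ s * a" for s :: nat
  define T where "T = {s. s < S \<and> flat_near \<xi> \<eta> K n (A s)}"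
  define c where "c = 2 ^ S * a / K"
  have A_mono: "A s \<le> A s'" if "s \<le> s'" for s s'
    unfolding A_def using a that by (intro mult_right_mono power_increasing) auto
  have tol: "2 * (A s / K) \<le> 2 * c" if "s \<in> T" for s
    using A_mono[of s S] that K unfolding T_def A_def c_def by (simp add: divide_right_mono)
  have c_le: "c \<le> 1 / 4" using S_a K unfolding c_def by (simp add: field_simps)
  have c_le_xi: "4 * c \<le> a * \<xi>" using K_xi K a unfolding c_def by (simp add: field_simps mult.commute mult_left_mono)
  have "finite T" unfolding T_def by simp
  have "\<forall>s\<in>T. \<exists>e z. e \<in> {A s..2 * A s} \<and> \<bar>geom \<xi> \<eta> n e - of_int z\<bar> < 2 * (A s / K)"
    unfolding T_def flat_near_def near_int_def by blast
  then obtain e z where e: "\<And>s. s \<in> T \<Longrightarrow> e s \<in> {A s..2 * A s}"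
      and z: "\<And>s. s \<in> T \<Longrightarrow> \<bar>geom \<xi> \<eta> n (e s) - of_int (z s)\<bar> < 2 * c"
    using tol by (metis order_less_le_trans)
  have twice: "card T \<le> 2 * card (z ` T)"
  proof (rule card_le_twice_card_image[OF \<open>finite T\<close>])
    fix s s' assume s: "s \<in> T" "s' \<in> T" "s < s'" "z s = z s'"
    then show "s' = s + 1" using e[OF s(1)] e[OF s(2)] z[OF s(1)] z[OF s(2)] unfolding A_def
      by (intro scales_near_same_integer_adjacent[OF xi a n c_le_xi, where e="e s" and e'="e s'"
          and z="of_int (z s)" and \<eta>=\<eta>]) auto
  qed
  have range: "real (card (z ` T)) \<le> 11 + 2 / \<xi>" if "T \<noteq> {}"
  proof -
    define t where "t = Max T"
    have t: "t \<in> T" "\<And>s. s \<in> T \<Longrightarrow> s \<le> t" using \<open>finite T\<close> that unfolding t_def by auto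
    show ?thesis
    proof (rule card_near_integers_le_if_flat[OF xi a])
      show "a \<le> A t" unfolding A_def using a by simp
      show "A t * geom_deriv \<xi> n (A t) < 1" using t(1) unfolding T_def flat_near_def by simp
      fix w assume "w \<in> z ` T"
      then obtain s where s: "s \<in> T" "w = z s" by blast
      have "a \<le> A s" unfolding A_def using a by simp
      then have "e s \<in> {a..2 * A t}" using e[OF s(1)] A_mono[OF t(2)[OF s(1)]] by auto
      moreover have "\<bar>geom \<xi> \<eta> n (e s) - of_int w\<bar> < 1" using z[OF s(1)] c_le s(2) by linarith
      ultimately show "\<exists>e\<in>{a..2 * A t}. \<bar>geom \<xi> \<eta> n e - of_int w\<bar> < 1" by blast
    qed
  qed
  have "real (card T) \<le> 22 + 4 / \<xi>"
  proof (cases "T = {}")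
    case False
    then show ?thesis using twice range by linarith
  qed (use xi in simp)
  moreover have "{s. s < S \<and> flat_near \<xi> \<eta> K n (2 ^ s * a)} = T" unfolding T_def A_def ..
  ultimately show ?thesis by simp
qed

lemma exists_le_average:
  fixes f :: "nat \<Rightarrow> real"
  assumes "1 \<le> S" "(\<Sum>s<S. f s) \<le> real S * c"
  shows "\<exists>s<S. f s \<le> c"
proof (rule ccontr)
  assume "\<not> ?thesis"
  moreover have "0 \<in> {..<S}" using assms(1) by simp
  ultimately have "(\<Sum>s<S. c) < (\<Sum>s<S. f s)" by (intro sum_strict_mono) (auto simp: not_le)
  then show False using assms(2) by simp
qed

lemma root_bound_le_flat:
  assumes xi: "0 < \<xi>" and A: "0 < A" and K: "0 < K" and n: "1 \<le> n"
  shows "root_bound \<xi> \<eta> A (A / K) n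
    \<le> 17 * (A / K) + (if flat_near \<xi> \<eta> K n A then 8 / (K * \<xi> * real n) else 0)"
proof (cases "\<exists>e\<in>{A..2 * A}. near_int (2 * (A / K)) (geom \<xi> \<eta> n e)")
  case near: True
  have D_pos: "0 < geom_deriv \<xi> n A" using xi A n by (intro geom_deriv_pos) auto
  have root: "root_bound \<xi> \<eta> A (A / K) n = 9 * (A / K) + 8 * (A / K) / (A * geom_deriv \<xi> n A)"
    using near unfolding root_bound_def by simp
  show ?thesis
  proof (cases "A * geom_deriv \<xi> n A < 1")
    case True
    have "8 * (A / K) / (A * geom_deriv \<xi> n A) = 8 / (K * geom_deriv \<xi> n A)"
      using A K D_pos by (simp add: field_simps)
    also have "\<dots> \<le> 8 / (K * (\<xi> * real n))"
      using geom_deriv_ge_linear[of \<xi> A n] D_pos xi A K n by (intro divide_left_mono mult_left_mono) auto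
    finally have "root_bound \<xi> \<eta> A (A / K) n \<le> 9 * (A / K) + 8 / (K * (\<xi> * real n))"
      unfolding root by linarith
    also have "\<dots> \<le> 17 * (A / K) + 8 / (K * (\<xi> * real n))"
      using A K by (intro add_right_mono mult_right_mono) auto
    finally show ?thesis using True near unfolding flat_near_def by (simp add: mult.assoc)
  next
    case False
    have "8 * (A / K) / (A * geom_deriv \<xi> n A) \<le> 8 * (A / K) / 1"
      using False A K by (intro divide_left_mono) auto
    then have "root_bound \<xi> \<eta> A (A / K) n \<le> 9 * (A / K) + 8 * (A / K)" unfolding root by simp
    also have "\<dots> = 17 * (A / K)" by simp
    finally show ?thesis using False unfolding flat_near_def by simp
  qed
next
  case False
  then have "root_bound \<xi> \<eta> A (A / K) n = 0" "\<not> flat_near \<xi> \<eta> K n A"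
    unfolding root_bound_def flat_near_def by auto
  then show ?thesis using A K by simp
qed

lemma sum_flat_near_scales_le:
  assumes xi: "0 < \<xi>" and a: "0 < a" and n: "1 \<le> n"
    and K: "4 \<le> K" and K_xi: "4 * 2 ^ S \<le> K * \<xi>" and S_a: "2 ^ S * a \<le> 1"
  shows "(\<Sum>s<S. if flat_near \<xi> \<eta> K n (2 ^ s * a) then 8 / (K * \<xi> * real n) else 0)
    \<le> 8 / (K * \<xi>) * (22 + 4 / \<xi>) * (1 / real n)"
proof -
  let ?F = "{s. s < S \<and> flat_near \<xi> \<eta> K n (2 ^ s * a)}"
  have "{..<S} \<inter> {s. flat_near \<xi> \<eta> K n (2 ^ s * a)} = ?F" by auto
  then have "(\<Sum>s<S. if flat_near \<xi> \<eta> K n (2 ^ s * a) then 8 / (K * \<xi> * real n) else 0)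
      = (\<Sum>s\<in>?F. 8 / (K * \<xi> * real n))"
    using sum.inter_restrict[of "{..<S}" "\<lambda>_. 8 / (K * \<xi> * real n)" "{s. flat_near \<xi> \<eta> K n (2 ^ s * a)}"]
    by simp
  also have "\<dots> = 8 / (K * \<xi> * real n) * real (card ?F)" by simp
  also have "\<dots> \<le> 8 / (K * \<xi> * real n) * (22 + 4 / \<xi>)"
    using card_flat_near_scales_le[OF xi a n K K_xi S_a, of \<eta>] xi K by (intro mult_left_mono) auto
  finally show ?thesis by (simp add: field_simps)
qed

text \<open>
  Averaging over the \<open>S\<close> dyadic scales \<open>2 ^ s * a\<close>: for a fixed small index \<open>n\<close>, a
  scale contributes more than \<open>17 \<tau>\<close> to the bound only if it is flat and near an integer,
  which happens for boundedly many scales; summing \<open>1 / n\<close> over \<open>n \<le> Nst\<close> gives the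
  factor \<open>1 + ln Nst\<close>.
\<close>

lemma exists_scale_roots_small:
  assumes xi: "0 < \<xi>" and a: "0 < a" and S: "1 \<le> S"
    and K: "4 \<le> K" and K_xi: "4 * 2 ^ S \<le> K * \<xi>" and S_a: "2 ^ S * a \<le> 1" and Nst: "1 \<le> Nst"
    and small_steep: "17 * 2 ^ S * a * real Nst \<le> K / 16"
    and small_flat: "8 * (22 + 4 / \<xi>) * (1 + ln (real Nst)) \<le> K * \<xi> * real S / 16"
  shows "\<exists>s<S. (\<Sum>n\<in>{1..Nst}. root_bound \<xi> \<eta> (2 ^ s * a) (2 ^ s * a / K) n) \<le> 1/8"
proof (rule exists_le_average[OF S])
  define A where "A s = (2::real) ^ s * a" for s :: nat
  define fl where "fl s n \<longleftrightarrow> flat_near \<xi> \<eta> K n (A s)" for s n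
  define c where "c = 2 ^ S * a / K"
  have "A s / K \<le> c" if "s < S" for s
    unfolding A_def c_def using a K that by (intro divide_right_mono mult_right_mono power_increasing) auto
  then have root: "root_bound \<xi> \<eta> (A s) (A s / K) n \<le> 17 * c + (if fl s n then 8 / (K * \<xi> * real n) else 0)"
    if "s < S" "n \<in> {1..Nst}" for s n
    using root_bound_le_flat[of \<xi> "A s" K n \<eta>] xi a K that unfolding fl_def A_def by fastforce
  have count: "(\<Sum>s<S. if fl s n then 8 / (K * \<xi> * real n) else 0) \<le> 8 / (K * \<xi>) * (22 + 4 / \<xi>) * (1 / real n)"
    if "1 \<le> n" for n
    using sum_flat_near_scales_le[OF xi a that K K_xi S_a, of \<eta>] unfolding fl_def A_def .
  have "(\<Sum>s<S. \<Sum>n\<in>{1..Nst}. root_bound \<xi> \<eta> (A s) (A s / K) n)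
      \<le> (\<Sum>s<S. \<Sum>n\<in>{1..Nst}. 17 * c + (if fl s n then 8 / (K * \<xi> * real n) else 0))"
    using root by (intro sum_mono) auto
  also have "\<dots> = real S * (real Nst * (17 * c)) + (\<Sum>n\<in>{1..Nst}. \<Sum>s<S. if fl s n then 8 / (K * \<xi> * real n) else 0)"
    by (simp add: sum.distrib sum.swap[of _ "{..<S}"])
  also have "\<dots> \<le> real S / 16 + real S / 16"
  proof (rule add_mono)
    have "real Nst * (17 * c) \<le> 1 / 16" using small_steep K unfolding c_def by (simp add: field_simps)
    from mult_left_mono[OF this, of "real S"]
    show "real S * (real Nst * (17 * c)) \<le> real S / 16" by simp
    have "(\<Sum>n\<in>{1..Nst}. \<Sum>s<S. if fl s n then 8 / (K * \<xi> * real n) else 0)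
        \<le> (\<Sum>n\<in>{1..Nst}. 8 / (K * \<xi>) * (22 + 4 / \<xi>) * (1 / real n))"
      using count by (intro sum_mono) auto
    also have "\<dots> = 8 / (K * \<xi>) * (22 + 4 / \<xi>) * (\<Sum>n\<in>{1..Nst}. 1 / real n)"
      by (simp add: sum_distrib_left)
    also have "\<dots> \<le> 8 / (K * \<xi>) * (22 + 4 / \<xi>) * (1 + ln (real Nst))"
      using sum_inverse_le_one_plus_ln[OF Nst] xi K by (intro mult_left_mono) auto
    also have "\<dots> \<le> real S / 16"
      using small_flat xi K by (simp add: field_simps)
    finally show "(\<Sum>n\<in>{1..Nst}. \<Sum>s<S. if fl s n then 8 / (K * \<xi> * real n) else 0) \<le> real S / 16" .
  qed
  finally show "(\<Sum>s<S. \<Sum>n\<in>{1..Nst}. root_bound \<xi> \<eta> (2 ^ s * a) (2 ^ s * a / K) n) \<le> real S * (1/8)"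
    unfolding A_def by simp
qed

section \<open>Parameters and the main theorem\<close>

text \<open>
  \<open>S\<close> dyadic scales \<open>2 ^ s * a\<close> are tried, the indices \<open>n > Nst\<close> are steep on all of them,
  and \<open>L = ln (1 / a)\<close> is large enough for all the estimates; at the chosen scale \<open>A\<close> the
  target distance is \<open>\<tau> = A / (1024 * L)\<close>.
\<close>

locale eps_parameters =
  fixes \<xi> \<delta> :: real
  assumes xi_pos: "0 < \<xi>" and delta_pos: "0 < \<delta>"
begin

definition Q :: real where "Q = 22 + 4 / \<xi>"
definition S :: nat where "S = nat \<lceil>Q / (4 * \<xi>)\<rceil> + 1"
definition lg :: real where "lg = \<bar>ln (16 / \<xi>)\<bar>"
definition P :: real where "P = 1 / \<xi> + 2 * lg + 4"
definition L :: real where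
  "L = 2 * (real S + 1) + \<bar>ln \<delta>\<bar> + 2 * ln 8192 + 17 * 2 ^ S * P / 64 + 1 + ln P + 2 ^ S / (256 * \<xi>) + 1"
definition a :: real where "a = exp (- L)"
definition Nst :: nat where "Nst = nat \<lceil>1 / (\<xi> * a)\<rceil> + nat \<lceil>2 * lg / a\<rceil> + 1"

lemma Q_pos: "0 < Q"
  unfolding Q_def using xi_pos by (simp add: add_pos_nonneg)

lemma S_ge_1: "1 \<le> S"
  unfolding S_def by simp

lemma P_ge_4: "4 \<le> P"
  unfolding P_def lg_def using xi_pos by simp

lemma
  shows L_ge_S: "2 * real S + 2 \<le> L"
    and L_ge_delta: "\<bar>ln \<delta>\<bar> + real S + 2 \<le> L"
    and L_ge_ln: "2 * ln 8192 \<le> L"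
    and L_ge_P: "17 * 2 ^ S * P / 64 \<le> L"
    and L_ge_ln_P: "1 + ln P \<le> L"
    and L_ge_xi: "2 ^ S / (256 * \<xi>) \<le> L"
proof -
  define u1 where "u1 = \<bar>ln \<delta>\<bar>"
  define u2 where "u2 = ln (8192::real)"
  define u3 where "u3 = 17 * 2 ^ S * P / 64"
  define u4 where "u4 = ln P"
  define u5 where "u5 = 2 ^ S / (256 * \<xi>)"
  have L: "L = 2 * (real S + 1) + u1 + 2 * u2 + u3 + 1 + u4 + u5 + 1"
    unfolding L_def u1_def u2_def u3_def u4_def u5_def ..
  have u: "0 \<le> u1" "0 \<le> u2" "0 \<le> u3" "0 \<le> u4" "0 \<le> u5" "0 \<le> real S"
    unfolding u1_def u2_def u3_def u4_def u5_def using P_ge_4 xi_pos by simp_all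
  show "2 * real S + 2 \<le> L" using u L by simp
  show "\<bar>ln \<delta>\<bar> + real S + 2 \<le> L" unfolding u1_def[symmetric] using u L by simp
  show "2 * ln 8192 \<le> L" unfolding u2_def[symmetric] using u L by simp
  show "17 * 2 ^ S * P / 64 \<le> L" unfolding u3_def[symmetric] using u L by simp
  show "1 + ln P \<le> L" unfolding u4_def[symmetric] using u L by simp
  show "2 ^ S / (256 * \<xi>) \<le> L" unfolding u5_def[symmetric] using u L by simp
qed

lemma L_ge_4: "4 \<le> L"
  using L_ge_S S_ge_1 by linarith

lemma a_pos: "0 < a"
  unfolding a_def by simp

lemma ln_inverse_a: "ln (1 / a) = L"
  unfolding a_def by (simp add: ln_div)

lemma two_power_mult_a_le: "2 ^ k * a \<le> exp (real k - L)"
proof -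
  have "2 ^ k * a \<le> exp (real k) * a" using two_power_le_exp[of k] a_pos by (intro mult_right_mono) auto
  also have "\<dots> = exp (real k - L)" unfolding a_def by (simp add: exp_diff exp_minus field_simps)
  finally show ?thesis .
qed

lemma top_scale_le: "2 ^ (S + 1) * a \<le> 1 / 2"
proof -
  have "2 ^ (S + 1) * a \<le> exp (real (S + 1) - L)" by (rule two_power_mult_a_le)
  also have "\<dots> \<le> exp (- 1)" using L_ge_S by simp
  also have "\<dots> \<le> 1 / 2" using exp_ge_add_one_self[of 1] by (simp add: exp_minus field_simps)
  finally show ?thesis .
qed

lemma top_scale_less_delta: "2 ^ (S + 1) * a < \<delta>"
proof -
  have "2 ^ (S + 1) * a \<le> exp (real (S + 1) - L)" by (rule two_power_mult_a_le)
  also have "\<dots> < exp (ln \<delta>)" using L_ge_delta by simp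
  finally show ?thesis using delta_pos by simp
qed

lemma a_mult_Nst_le: "a * real Nst \<le> P"
proof -
  have "real Nst \<le> (1 / (\<xi> * a) + 1) + (2 * lg / a + 1) + 1"
    unfolding Nst_def using xi_pos a_pos by (simp add: lg_def of_nat_nat) linarith
  then have "a * real Nst \<le> a * ((1 / (\<xi> * a) + 1) + (2 * lg / a + 1) + 1)"
    using a_pos by (intro mult_left_mono) auto
  also have "\<dots> = 1 / \<xi> + 2 * lg + 3 * a" using a_pos xi_pos by (simp add: field_simps)
  also have "\<dots> \<le> P"
  proof -
    have "1 \<le> (2::real) ^ (S + 1)" by (rule one_le_power) simp
    from mult_right_mono[OF this, of a] have "a \<le> 2 ^ (S + 1) * a" using a_pos by simp
    then show ?thesis using top_scale_le unfolding P_def by linarith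
  qed
  finally show ?thesis .
qed

lemma exists_scale:
  "\<exists>s<S. (\<Sum>n\<in>{1..Nst}. root_bound \<xi> \<eta> (2 ^ s * a) (2 ^ s * a / (1024 * L)) n) \<le> 1/8"
proof (rule exists_scale_roots_small[OF xi_pos a_pos S_ge_1])
  show "4 \<le> 1024 * L" using L_ge_4 by simp
  show "4 * 2 ^ S \<le> 1024 * L * \<xi>" using L_ge_xi xi_pos by (simp add: field_simps)
  show "2 ^ S * a \<le> 1" using top_scale_le a_pos by simp
  show "1 \<le> Nst" unfolding Nst_def by simp
  have "17 * 2 ^ S * a * real Nst = 17 * 2 ^ S * (a * real Nst)" by simp
  also have "\<dots> \<le> 17 * 2 ^ S * P" using a_mult_Nst_le by (intro mult_left_mono) auto
  also have "\<dots> \<le> 1024 * L / 16" using L_ge_P by simp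
  finally show "17 * 2 ^ S * a * real Nst \<le> 1024 * L / 16" .
  have "ln (real Nst) \<le> ln (P / a)"
    using a_mult_Nst_le a_pos unfolding Nst_def by (intro ln_mono) (auto simp: field_simps mult.commute)
  also have "\<dots> = ln P + L" using P_ge_4 a_pos ln_inverse_a by (simp add: ln_div)
  finally have "8 * (22 + 4 / \<xi>) * (1 + ln (real Nst)) \<le> 8 * Q * (2 * L)"
    using L_ge_ln_P Q_pos unfolding Q_def by (intro mult_left_mono) auto
  also have "\<dots> \<le> 1024 * L * \<xi> * real S / 16"
  proof -
    have "Q / (4 * \<xi>) \<le> real S" unfolding S_def by linarith
    then have "16 * Q * L \<le> 64 * \<xi> * real S * L" using xi_pos L_ge_4 by (simp add: field_simps)
    then show ?thesis by (simp add: algebra_simps)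
  qed
  finally show "8 * (22 + 4 / \<xi>) * (1 + ln (real Nst)) \<le> 1024 * L * \<xi> * real S / 16" .
qed

lemma steep_at:
  assumes "a \<le> A" "A \<le> 1/2" "Nst < n"
  shows "16 \<le> \<xi> * (1 + A) ^ (n - 1)"
proof -
  have "nat \<lceil>2 * lg / a\<rceil> \<le> n - 1" using assms(3) unfolding Nst_def by linarith
  then have "2 * lg / a \<le> real (n - 1)" by linarith
  then have "lg \<le> real (n - 1) * a / 2" using a_pos by (simp add: field_simps)
  also have "\<dots> \<le> real (n - 1) * A / 2" using assms(1) by (intro divide_right_mono mult_left_mono) auto
  finally have "exp lg \<le> exp (real (n - 1) * A / 2)" by simp
  also have "\<dots> \<le> (1 + A) ^ (n - 1)" using assms a_pos by (intro exp_half_le_one_plus_power) auto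
  finally have lg: "exp lg \<le> (1 + A) ^ (n - 1)" .
  have "16 / \<xi> = exp (ln (16 / \<xi>))" using xi_pos by simp
  also have "\<dots> \<le> exp lg" unfolding lg_def by simp
  finally have "16 / \<xi> \<le> (1 + A) ^ (n - 1)" using lg by linarith
  then show ?thesis using xi_pos by (simp add: field_simps)
qed

lemma steep_linear_at:
  assumes "a \<le> A" "Nst < n"
  shows "1 \<le> A * \<xi> * real n"
proof -
  have "nat \<lceil>1 / (\<xi> * a)\<rceil> \<le> n" using assms(2) unfolding Nst_def by linarith
  then have "1 / (\<xi> * a) \<le> real n" by linarith
  then have "1 \<le> a * \<xi> * real n" using xi_pos a_pos by (simp add: field_simps)
  also have "\<dots> \<le> A * \<xi> * real n" using assms(1) xi_pos by (intro mult_right_mono) auto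
  finally show ?thesis .
qed

lemma ln_eight_over_tau_le:
  assumes "a \<le> A"
  shows "ln (8 / (A / (1024 * L))) \<le> 2 * L"
proof -
  have A: "0 < A" using assms a_pos by linarith
  have "ln (8 / (A / (1024 * L))) = ln 8192 + ln L + ln (1 / A)"
    using A L_ge_4 by (simp add: ln_div ln_mult)
  moreover have "ln (1 / A) \<le> L"
    using ln_mono[of "1 / A" "1 / a"] assms a_pos A ln_inverse_a by (simp add: field_simps)
  moreover have "ln L \<le> L / 2" using L_ge_4 by (intro ln_le_half_self) simp
  ultimately show ?thesis using L_ge_ln by linarith
qed

lemma lag_at:
  assumes "a \<le> A" "A \<le> 1/4"
  defines "d \<equiv> nat \<lceil>2 * ln (8 / (A / (1024 * L))) / A\<rceil>"
  shows "8 \<le> A / (1024 * L) * (1 + A) ^ d" and "34 * (A / (1024 * L)) * real d \<le> 1/4"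
proof -
  define \<tau> where "\<tau> = A / (1024 * L)"
  have A: "0 < A" using assms a_pos by linarith
  have "4096 \<le> 1024 * L" using L_ge_4 by simp
  then have "A / (1024 * L) \<le> A / 4096"
    by (rule divide_left_mono) (use A L_ge_4 in auto)
  then have \<tau>: "0 < \<tau>" "\<tau> \<le> A / 4096" unfolding \<tau>_def using A L_ge_4 by auto
  then have "0 \<le> ln (8 / \<tau>)" using assms by (simp add: field_simps)
  then have d: "2 * ln (8 / \<tau>) / A \<le> real d" "real d \<le> 2 * ln (8 / \<tau>) / A + 1"
    unfolding d_def \<tau>_def[symmetric] using A by (simp_all add: of_nat_nat)
  have "ln (8 / \<tau>) \<le> real d * A / 2" using d(1) A by (simp add: field_simps)
  then have "exp (ln (8 / \<tau>)) \<le> exp (real d * A / 2)" by simp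
  also have "\<dots> \<le> (1 + A) ^ d" using A assms by (intro exp_half_le_one_plus_power) auto
  finally show "8 \<le> A / (1024 * L) * (1 + A) ^ d" using \<tau> unfolding \<tau>_def[symmetric] by (simp add: field_simps)
  have "34 * \<tau> * real d \<le> 34 * \<tau> * (2 * ln (8 / \<tau>) / A + 1)"
    using d(2) \<tau> by (intro mult_left_mono) auto
  also have "\<dots> = 68 * ln (8 / \<tau>) / (1024 * L) + 34 * \<tau>"
    unfolding \<tau>_def using A L_ge_4 by (simp add: field_simps)
  also have "\<dots> \<le> 68 * (2 * L) / (1024 * L) + 34 * \<tau>"
    using ln_eight_over_tau_le[OF assms(1)] L_ge_4 unfolding \<tau>_def
    by (intro add_right_mono divide_right_mono) auto
  also have "\<dots> \<le> 1/4" using L_ge_4 \<tau> assms by simp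
  finally show "34 * (A / (1024 * L)) * real d \<le> 1/4" unfolding \<tau>_def .
qed

lemma exists_eps:
  "\<exists>\<epsilon> \<tau>. 0 < \<epsilon> \<and> \<epsilon> < \<delta> \<and> \<epsilon> / (8192 * \<bar>ln \<epsilon>\<bar>) < \<tau> \<and>
     (\<forall>n\<ge>1. \<tau> \<le> dist_int (geom \<xi> \<eta> n \<epsilon>))"
proof -
  obtain s where s: "s < S"
    and roots: "(\<Sum>n\<in>{1..Nst}. root_bound \<xi> \<eta> (2 ^ s * a) (2 ^ s * a / (1024 * L)) n) \<le> 1/8"
    using exists_scale by blast
  define A where "A = 2 ^ s * a"
  define \<tau> where "\<tau> = A / (1024 * L)"
  have a_le_A: "a \<le> A" unfolding A_def using a_pos by simp
  have A_le: "A \<le> 2 ^ S * a" unfolding A_def using s a_pos by (intro mult_right_mono power_increasing) auto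
  then have A_le_quarter: "A \<le> 1/4" using top_scale_le by simp
  have A_pos: "0 < A" using a_le_A a_pos by linarith
  have \<tau>: "0 < \<tau>" "\<tau> \<le> 1/64" unfolding \<tau>_def using A_pos A_le_quarter L_ge_4 by (simp_all add: field_simps)
  define d where "d = nat \<lceil>2 * ln (8 / (A / (1024 * L))) / A\<rceil>"
  have steep: "16 \<le> \<xi> * (1 + A) ^ (n - 1)" and steep_linear: "1 \<le> A * \<xi> * real n"
    if "Nst < n" for n
    using steep_at[OF a_le_A _ that] steep_linear_at[OF a_le_A that] A_le_quarter by auto
  note lag = lag_at[OF a_le_A A_le_quarter, folded \<tau>_def d_def]
  obtain e where e: "e \<in> {A..2 * A}" and good: "\<forall>n. 1 \<le> n \<longrightarrow> \<tau> \<le> dist_int (geom \<xi> \<eta> n e)"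
    using exists_good_point_at_scale[OF xi_pos A_pos \<tau> steep steep_linear lag
        roots[folded A_def, folded \<tau>_def]] A_le_quarter by auto
  have e_pos: "0 < e" and e_le: "e \<le> 2 ^ (S + 1) * a" using e A_pos A_le by auto
  have "L / 2 \<le> \<bar>ln e\<bar>"
  proof -
    have "ln e \<le> ln (2 ^ (S + 1) * a)" using e_le e_pos by (intro ln_mono) auto
    also have "\<dots> = real (S + 1) * ln 2 - L" using a_pos unfolding a_def by (simp add: ln_mult ln_realpow algebra_simps)
    also have "\<dots> \<le> real (S + 1) - L" using ln_le_minus_one[of 2] by (simp add: mult_left_le)
    finally show ?thesis using L_ge_S by linarith
  qed
  then have "e / (8192 * \<bar>ln e\<bar>) \<le> (2 * A) / (8192 * (L / 2))"
    using e L_ge_4 A_pos by (intro frac_le) auto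
  also have "\<dots> < \<tau>" unfolding \<tau>_def using A_pos L_ge_4 by (simp add: field_simps)
  finally show ?thesis using e_pos e_le top_scale_less_delta good by (intro exI[of _ e] exI[of _ \<tau>]) auto
qed

end

text \<open>The constant \<open>\<gamma> = 1 / 8192\<close> works for every \<open>\<xi> \<noteq> 0\<close>.\<close>

theorem theorem2:
  fixes M :: real
  assumes "M > 0"
  shows "\<exists>\<gamma>::real. \<gamma> > 0 \<and>
    (\<forall>\<xi>::real. \<forall>\<eta>::nat \<Rightarrow> real. \<forall>\<delta>::real.
       \<xi> \<noteq> 0 \<longrightarrow> \<bar>\<xi>\<bar> \<le> M \<longrightarrow> \<delta> > 0 \<longrightarrow>
       (\<exists>\<epsilon>::real. 0 < \<epsilon> \<and> \<epsilon> < \<delta> \<and>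
          (INF n\<in>{1::nat..}. dist_int (\<xi> * (1 + \<epsilon>) ^ n + \<eta> n))
            > \<gamma> * \<epsilon> / \<bar>ln \<epsilon>\<bar>))"
proof (rule exI[of _ "1/8192"], intro conjI allI impI)
  fix \<xi> :: real and \<eta> :: "nat \<Rightarrow> real" and \<delta> :: real
  assume "\<xi> \<noteq> 0" "\<bar>\<xi>\<bar> \<le> M" "\<delta> > 0"
  interpret eps_parameters "\<bar>\<xi>\<bar>" \<delta> using \<open>\<xi> \<noteq> 0\<close> \<open>\<delta> > 0\<close> by unfold_locales auto
  obtain \<epsilon> \<tau> where \<epsilon>: "0 < \<epsilon>" "\<epsilon> < \<delta>" "\<epsilon> / (8192 * \<bar>ln \<epsilon>\<bar>) < \<tau>"
    and good: "\<forall>n\<ge>1. \<tau> \<le> dist_int (geom \<bar>\<xi>\<bar> (\<lambda>n. sgn \<xi> * \<eta> n) n \<epsilon>)"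
    using exists_eps by blast
  have "geom \<bar>\<xi>\<bar> (\<lambda>n. sgn \<xi> * \<eta> n) n \<epsilon> = sgn \<xi> * (\<xi> * (1 + \<epsilon>) ^ n + \<eta> n)" for n
    unfolding geom_def by (simp add: abs_sgn algebra_simps)
  then have "\<tau> \<le> dist_int (\<xi> * (1 + \<epsilon>) ^ n + \<eta> n)" if "n \<ge> 1" for n
    using good that dist_int_sgn_mult[OF \<open>\<xi> \<noteq> 0\<close>] by metis
  then have "\<tau> \<le> (INF n\<in>{1::nat..}. dist_int (\<xi> * (1 + \<epsilon>) ^ n + \<eta> n))"
    by (intro cINF_greatest) auto
  then show "\<exists>\<epsilon>. 0 < \<epsilon> \<and> \<epsilon> < \<delta> \<and>
      (INF n\<in>{1::nat..}. dist_int (\<xi> * (1 + \<epsilon>) ^ n + \<eta> n)) > 1/8192 * \<epsilon> / \<bar>ln \<epsilon>\<bar>"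
    using \<epsilon> by (intro exI[of _ \<epsilon>]) auto
qed simp

end
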